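(* Let $\varphi$ be an AND-OR formula with $n$ leaves in which every gate has fan-in two, let $r$ be its root, fix arbitrary $s_1(v),s_2(v)>0$ for every internal vertex $v$, and let $P_\varphi$ be the span program obtained from the gate span programs $P_v$ by reduced tensor-product composition from the root toward the leaves (in an otherwise arbitrary order). Let $U$ be the set of maximal false inputs to $\varphi$. Then, identifying the standard basis of the inner product space of $P_\varphi$ with $U$ (so the space is $\mathbb{C}^U$), $P_\varphi$ is given as follows. Its target vector is $$\lvert t\rangle=\sum_{x\in U}\Bigl(\prod_{v\in T_x}\begin{Bmatrix}\alpha_{j(x,v)}(v)\\ \delta(v)\end{Bmatrix}\cdot\prod_{v\notin T_x}\begin{Bmatrix}\alpha(v)\\ \delta(v)\end{Bmatrix}\Bigr)\lvert x\rangle .$$ Its input vectors are indexed by $I_{k,1}=\{k\}$, $I_{k,0}=\emptyset$ for $k\in[n]$, with $$\lvert v_k\rangle=\sum_{x\in U:\,x_k=0}\Bigl(\prod_{v\in\gamma_k}\begin{Bmatrix}\beta_{j(k,v)}(v)\\ \epsilon_{j(k,v)}(v)\end{Bmatrix}\cdot\prod_{v\in T_x\setminus\gamma_k}\begin{Bmatrix}\alpha_{j(x,v)}(v)\\ \delta(v)\end{Bmatrix}\cdot\prod_{v\notin T_x}\begin{Bmatrix}\alpha(v)\\ \delta(v)\end{Bmatrix}\Bigr)\lvert x\rangle .$$ In each brace the top entry is taken if $v$ is an AND gate and the bottom entry if $v$ is an OR gate, and all products range over internal vertices $v$ of $\varphi$ only. In particular, for $x\in U$, $\langle x\vert v_k\rangle=0$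 if and only if $x_k=1$, and thus $\lvert x\rangle/\langle t\vert x\rangle$ is a witness for $f_{P_\varphi}(x)=0$.
   Context: An AND-OR formula is a rooted tree with internal vertices labeled AND or OR, leaves numbered $1,\dots,n$, defining $\varphi:\{0,1\}^n\to\{0,1\}$ by placing $x_k$ on leaf $k$ and evaluating toward the root. Here each internal vertex $v$ has exactly two ordered children (child 1 and child 2). A strict, monotone span program on $N$ bits consists of an inner product space $V$ over $\mathbb{C}$ with a fixed orthonormal basis, a target $\lvert t\rangle\in V$, disjoint finite index sets $I_{k,1}$ ($k\in[N]$) and input vectors $\lvert v_i\rangle$; it computes $f_P(x)=1$ iff $\lvert t\rangle\in\mathrm{Span}\{\lvert v_i\rangle:i\in I_{k,1},x_k=1\}$. A witness for $f_P(x)=0$ is a vector $\lvert w'\rangle\in V$ with $\langle t\vert w'\rangle=1$ and $\langle v_i\vert w'\rangle=0$ for all $i\in I_{k,1}$ with $x_k=1$. Gate span programs: for an internal vertex $v$, $P_v=P_{\mathrm{AND}}(s_1(v),s_2(v))$ if $v$ is an AND gate: space $\mathbb{C}^2$, target $(\alpha_1(v),\alpha_2(v))^T$, input vectors $(\beta_1(v),0)^T$ for input 1 and $(0,\beta_2(v))^T$ for input 2; and $P_v=P_{\mathrm{OR}}(s_1(v),s_2(v))$ if $v$ is an OR gate: space $\mathbb{C}$, target $\delta(v)$, input vectors $\epsilon_1(v)$, $\epsilon_2(v)$. Here $\alpha_j(v)=\epsilon_j(v)=(s_j(v)/(s_1(v)+s_2(v)))^{1/4}$, $\beta_j(v)=1$,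 $\delta(v)=1$, $\alpha(v)=\sqrt{\alpha_1(v)^2+\alpha_2(v)^2}$. Each has $I_{1,1}=\{1\}$, $I_{2,1}=\{2\}$. Reduced tensor-product composition of a strict monotone program $P'$ (space $V'$ with basis, target $\lvert t'\rangle$, inputs $\lvert v'_{i'}\rangle$, $i'\in I'_{k,1}$, $k\in[m]$) into input $j$ of a strict monotone program $P$ with space $\mathbb{C}^{[d]}$: let $Z=\{l\in[d]:\langle l\vert v_i\rangle=0\ \forall i\in I_{j,1}\}$; set $V_l=V'$, $\lvert\pi_l\rangle=\lvert t'\rangle$ for $l\notin Z$ and $V_l=\mathbb{C}$, $\lvert\pi_l\rangle=\lVert\lvert t'\rangle\rVert$ for $l\in Z$. The result has space $\bigoplus_l V_l$ (with the union of the bases), target $\sum_l\langle l\vert t\rangle\lvert\pi_l\rangle_{V_l}$; input $j$ of $P$ is replaced by the $m$ inputs of $P'$, with index sets $I_{j,1}\times I'_{k,1}$ and vectors $\sum_l\langle l\vert v_i\rangle\lvert v'_{i'}\rangle_{V_l}$; every other input $j'$ of $P$ keeps index set $I_{j',1}$ with vectors $\sum_l\langle l\vert v_\iota\rangle\lvert\pi_l\rangle_{V_l}$. The construction of $P_\varphi$ starts from $P_r$ and repeatedly composes $P_v$ into the input of the current span program corresponding to $v$ (whose parent has already been composed), until all inputs correspond to leaves of $\varphi$. An input $x\in\{0,1\}^n$ is a maximal false input if $\varphi(x)=0$ and flipping any bit of $x$ from $0$ to $1$ makes $\varphi$ evaluate to $1$. For such $x$, $T_x$ is the subtree of $\varphi$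 rooted at $r$ whose leaves are exactly the leaves $k$ with $x_k=0$; for each vertex $v\in T_x$, if $v$ is OR both its children are in $T_x$, and if $v$ is AND exactly one child is in $T_x$, indexed $j(x,v)\in[2]$. $\gamma_k$ is the simple path from leaf $k$ to $r$, and $j(k,v)\in[2]$ is the child of $v$ lying on $\gamma_k$. *)

theory Defs
  imports Complex_Main
begin

datatype gt = AND | OR

(* Leaf k carries the leaf number k; Gate g c1 c2 has ordered children c1 (child 1), c2 (child 2) *)
datatype form = Leaf nat | Gate gt form form

fun leaves :: "form \<Rightarrow> nat list" where
  "leaves (Leaf k) = [k]"
| "leaves (Gate g a b) = leaves a @ leaves b"

fun evalf :: "form \<Rightarrow> (nat \<Rightarrow> bool) \<Rightarrow> bool" where
  "evalf (Leaf k) x = x k"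
| "evalf (Gate AND a b) x = (evalf a x \<and> evalf b x)"
| "evalf (Gate OR a b) x = (evalf a x \<or> evalf b x)"

text \<open>Vertices are addressed by positions: the list of child indices (1 or 2) on the
  path from the root r (position []).\<close>
fun sub :: "form \<Rightarrow> nat list \<Rightarrow> form option" where
  "sub t [] = Some t"
| "sub (Leaf k) (i # p) = None"
| "sub (Gate g a b) (i # p) = (if i = 1 then sub a p else if i = 2 then sub b p else None)"

definition gates :: "form \<Rightarrow> nat list set" where
  "gates \<phi> = {p. \<exists>g a b. sub \<phi> p = Some (Gate g a b)}"

definition isAND :: "form \<Rightarrow> nat list \<Rightarrow> bool" where
  "isAND \<phi> p = (\<exists>a b. sub \<phi> p = Some (Gate AND a b))"

definition leafposs :: "form \<Rightarrow> nat list set" where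
  "leafposs \<phi> = {p. \<exists>k. sub \<phi> p = Some (Leaf k)}"

definition leafpos :: "form \<Rightarrow> nat \<Rightarrow> nat list" where
  "leafpos \<phi> k = (THE p. sub \<phi> p = Some (Leaf k))"

definition leaflabel :: "form \<Rightarrow> nat list \<Rightarrow> nat" where
  "leaflabel \<phi> p = (case sub \<phi> p of Some (Leaf k) \<Rightarrow> k | _ \<Rightarrow> 0)"

text \<open>Inputs x in {0,1}^n are functions nat => bool vanishing outside [n]; True = 1.\<close>
definition maxfalse :: "form \<Rightarrow> nat \<Rightarrow> (nat \<Rightarrow> bool) \<Rightarrow> bool" where
  "maxfalse \<phi> n x \<longleftrightarrow> (\<forall>k. x k \<longrightarrow> k \<in> {1..n}) \<and> \<not> evalf \<phi> x \<and>
      (\<forall>k\<in>{1..n}. \<not> x k \<longrightarrow> evalf \<phi> (x(k := True)))"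

definition Uset :: "form \<Rightarrow> nat \<Rightarrow> (nat \<Rightarrow> bool) set" where
  "Uset \<phi> n = {x. maxfalse \<phi> n x}"

definition Tx_ok :: "form \<Rightarrow> (nat \<Rightarrow> bool) \<Rightarrow> nat list set \<Rightarrow> bool" where
  "Tx_ok \<phi> x S \<longleftrightarrow> S \<subseteq> {p. sub \<phi> p \<noteq> None} \<and> [] \<in> S \<and>
     (\<forall>p i. p @ [i] \<in> S \<longrightarrow> p \<in> S) \<and>
     (\<forall>p k. sub \<phi> p = Some (Leaf k) \<longrightarrow> (p \<in> S \<longleftrightarrow> \<not> x k)) \<and>
     (\<forall>p\<in>S. \<forall>a b. sub \<phi> p = Some (Gate OR a b) \<longrightarrow> p @ [1] \<in> S \<and> p @ [2] \<in> S) \<and>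
     (\<forall>p\<in>S. \<forall>a b. sub \<phi> p = Some (Gate AND a b) \<longrightarrow> (p @ [1] \<in> S) \<noteq> (p @ [2] \<in> S))"

definition Tx :: "form \<Rightarrow> (nat \<Rightarrow> bool) \<Rightarrow> nat list set" where
  "Tx \<phi> x = (THE S. Tx_ok \<phi> x S)"

definition jx :: "form \<Rightarrow> (nat \<Rightarrow> bool) \<Rightarrow> nat list \<Rightarrow> nat" where
  "jx \<phi> x v = (THE j. j \<in> {1, 2} \<and> v @ [j] \<in> Tx \<phi> x)"

definition gamma :: "form \<Rightarrow> nat \<Rightarrow> nat list set" where
  "gamma \<phi> k = {v \<in> gates \<phi>. \<exists>q. leafpos \<phi> k = v @ q}"

definition jk :: "form \<Rightarrow> nat \<Rightarrow> nat list \<Rightarrow> nat" where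
  "jk \<phi> k v = leafpos \<phi> k ! length v"

type_synonym weights = "nat list \<Rightarrow> nat \<Rightarrow> real"  (* s v j = s_j(v) *)

definition alpha :: "weights \<Rightarrow> nat list \<Rightarrow> nat \<Rightarrow> real" where
  "alpha s v j = (s v j / (s v 1 + s v 2)) powr (1/4)"

definition eps :: "weights \<Rightarrow> nat list \<Rightarrow> nat \<Rightarrow> real" where
  "eps s v j = (s v j / (s v 1 + s v 2)) powr (1/4)"

definition beta :: "nat list \<Rightarrow> nat \<Rightarrow> real" where
  "beta v j = 1"

definition delta :: "nat list \<Rightarrow> real" where
  "delta v = 1"

definition alphatot :: "weights \<Rightarrow> nat list \<Rightarrow> real" where
  "alphatot s v = sqrt ((alpha s v 1)\<^sup>2 + (alpha s v 2)\<^sup>2)"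

text \<open>Labels for basis elements and input-vector indices; Pr l b is the basis vector b of
  the copy V_l, Zl l the one-dimensional V_l for l in Z.\<close>
datatype lab = L nat | Pr lab lab | Zl lab

text \<open>A strict monotone span program: orthonormal basis sp_basis, vectors as coordinate
  functions, inputs named by positions of the formula, I_{p,1} = sp_idx p.\<close>
record sprog =
  sp_basis :: "lab set"
  sp_target :: "lab \<Rightarrow> complex"
  sp_inputs :: "nat list set"
  sp_idx :: "nat list \<Rightarrow> lab set"
  sp_vec :: "lab \<Rightarrow> lab \<Rightarrow> complex"

definition ip :: "sprog \<Rightarrow> (lab \<Rightarrow> complex) \<Rightarrow> (lab \<Rightarrow> complex) \<Rightarrow> complex" where
  "ip P u w = (\<Sum>b\<in>sp_basis P. cnj (u b) * w b)"

definition nrm :: "sprog \<Rightarrow> (lab \<Rightarrow> complex) \<Rightarrow> real" where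
  "nrm P u = sqrt (\<Sum>b\<in>sp_basis P. (cmod (u b))\<^sup>2)"

definition witness :: "sprog \<Rightarrow> (nat list \<Rightarrow> bool) \<Rightarrow> (lab \<Rightarrow> complex) \<Rightarrow> bool" where
  "witness P y w \<longleftrightarrow> ip P (sp_target P) w = 1 \<and>
     (\<forall>p\<in>sp_inputs P. y p \<longrightarrow> (\<forall>i\<in>sp_idx P p. ip P (sp_vec P i) w = 0))"

text \<open>Gate span program P_v for the internal vertex at position p; its inputs 1,2 are
  named by the child positions p@[1], p@[2].\<close>
definition gateprog :: "form \<Rightarrow> weights \<Rightarrow> nat list \<Rightarrow> sprog" where
  "gateprog \<phi> s p =
    (if isAND \<phi> p then
       \<lparr> sp_basis = {L 1, L 2},
         sp_target = (\<lambda>b. if b = L 1 then complex_of_real (alpha s p 1)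
                          else if b = L 2 then complex_of_real (alpha s p 2) else 0),
         sp_inputs = {p @ [1], p @ [2]},
         sp_idx = (\<lambda>q. if q = p @ [1] then {L 1} else if q = p @ [2] then {L 2} else {}),
         sp_vec = (\<lambda>i b. if i = L 1 \<and> b = L 1 then complex_of_real (beta p 1)
                         else if i = L 2 \<and> b = L 2 then complex_of_real (beta p 2) else 0) \<rparr>
     else
       \<lparr> sp_basis = {L 1},
         sp_target = (\<lambda>b. if b = L 1 then complex_of_real (delta p) else 0),
         sp_inputs = {p @ [1], p @ [2]},
         sp_idx = (\<lambda>q. if q = p @ [1] then {L 1} else if q = p @ [2] then {L 2} else {}),
         sp_vec = (\<lambda>i b. if b = L 1 then
                            (if i = L 1 then complex_of_real (eps s p 1)
                             else if i = L 2 then complex_of_real (eps s p 2) else 0)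
                          else 0) \<rparr>)"

text \<open>Reduced tensor-product composition of Q (= P') into input j of P.\<close>
definition compose :: "sprog \<Rightarrow> nat list \<Rightarrow> sprog \<Rightarrow> sprog" where
  "compose Q j P =
    (let Z = {l \<in> sp_basis P. \<forall>i\<in>sp_idx P j. sp_vec P i l = 0};
         nt = complex_of_real (nrm Q (sp_target Q));
         isnew = (\<lambda>i. \<exists>a a' k. i = Pr a a' \<and> a \<in> sp_idx P j \<and> k \<in> sp_inputs Q \<and> a' \<in> sp_idx Q k)
     in
     \<lparr> sp_basis = {Pr l b | l b. l \<in> sp_basis P - Z \<and> b \<in> sp_basis Q} \<union> Zl ` Z,
       sp_target = (\<lambda>c. case c of Pr l b \<Rightarrow> sp_target P l * sp_target Q b
                                | Zl l \<Rightarrow> sp_target P l * nt | L _ \<Rightarrow> 0),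
       sp_inputs = (sp_inputs P - {j}) \<union> sp_inputs Q,
       sp_idx = (\<lambda>k. if k \<in> sp_inputs Q then {Pr a a' | a a'. a \<in> sp_idx P j \<and> a' \<in> sp_idx Q k}
                     else if k = j then {} else sp_idx P k),
       sp_vec = (\<lambda>i c. if isnew i then
                          (case i of Pr a a' \<Rightarrow>
                             (case c of Pr l b \<Rightarrow> sp_vec P a l * sp_vec Q a' b | _ \<Rightarrow> 0)
                           | _ \<Rightarrow> 0)
                       else
                          (case c of Pr l b \<Rightarrow> sp_vec P i l * sp_target Q b
                                   | Zl l \<Rightarrow> sp_vec P i l * nt | L _ \<Rightarrow> 0)) \<rparr>)"

inductive reach :: "form \<Rightarrow> weights \<Rightarrow> sprog \<Rightarrow> bool" for \<phi> s where
  root: "[] \<in> gates \<phi> \<Longrightarrow> reach \<phi> s (gateprog \<phi> s [])"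
| step: "reach \<phi> s P \<Longrightarrow> p \<in> sp_inputs P \<Longrightarrow> p \<in> gates \<phi> \<Longrightarrow>
           reach \<phi> s (compose (gateprog \<phi> s p) p P)"

definition brace_in :: "form \<Rightarrow> weights \<Rightarrow> (nat \<Rightarrow> bool) \<Rightarrow> nat list \<Rightarrow> real" where
  "brace_in \<phi> s x v = (if isAND \<phi> v then alpha s v (jx \<phi> x v) else delta v)"

definition brace_out :: "form \<Rightarrow> weights \<Rightarrow> nat list \<Rightarrow> real" where
  "brace_out \<phi> s v = (if isAND \<phi> v then alphatot s v else delta v)"

definition brace_path :: "form \<Rightarrow> weights \<Rightarrow> nat \<Rightarrow> nat list \<Rightarrow> real" where
  "brace_path \<phi> s k v = (if isAND \<phi> v then beta v (jk \<phi> k v) else eps s v (jk \<phi> k v))"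

definition tcoef :: "form \<Rightarrow> weights \<Rightarrow> (nat \<Rightarrow> bool) \<Rightarrow> complex" where
  "tcoef \<phi> s x = complex_of_real
     ((\<Prod>v\<in>gates \<phi> \<inter> Tx \<phi> x. brace_in \<phi> s x v) * (\<Prod>v\<in>gates \<phi> - Tx \<phi> x. brace_out \<phi> s v))"

definition vcoef :: "form \<Rightarrow> weights \<Rightarrow> nat \<Rightarrow> (nat \<Rightarrow> bool) \<Rightarrow> complex" where
  "vcoef \<phi> s k x = (if x k then 0 else complex_of_real
     ((\<Prod>v\<in>gamma \<phi> k. brace_path \<phi> s k v) *
      (\<Prod>v\<in>(gates \<phi> \<inter> Tx \<phi> x) - gamma \<phi> k. brace_in \<phi> s x v) *
      (\<Prod>v\<in>gates \<phi> - Tx \<phi> x. brace_out \<phi> s v)))"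

end

theory Submission
  imports Defs
begin

text \<open>
  The composition is tracked by an invariant indexed by the set C of gates composed so far:
  the basis corresponds to the partial trees, i.e. sets of positions that contain the root,
  are closed under parents, and contain both children of each OR gate of C they contain and
  exactly one child of each AND gate of C they contain. Composing P_p into input p keeps a
  basis vector whose tree avoids p as one vector of the zero set Z, scaled by the norm of the
  target of P_p, which is the brace factor of p outside T_x; a basis vector whose tree
  contains p is split according to the basis of P_p, i.e. to the admissible choices of
  children of p, and picks up the brace factor of p inside T_x. Hence target and input
  coefficients stay products of brace factors over C. Once every gate is composed, the partial
  trees are exactly the trees T_x of the maximal false inputs x, and since all brace factors
  are positive, the input coefficient at x vanishes exactly when x_k = 1.
\<close>

section \<open>Positions and evaluation\<close>

lemma sub_append: "sub t (p @ q) = (case sub t p of None \<Rightarrow> None | Some u \<Rightarrow> sub u q)"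
proof (induction p arbitrary: t)
  case (Cons i p) then show ?case by (cases t) auto
qed simp

lemma sub_snocD:
  "sub t (p @ [i]) = Some u \<Longrightarrow>
     \<exists>g a b. sub t p = Some (Gate g a b) \<and> i \<in> {1,2} \<and> u = (if i = 1 then a else b)"
  by (cases "sub t p") (auto simp: sub_append elim: sub.elims split: if_splits)

lemma sub_Gate_children:
  "sub t p = Some (Gate g a b) \<Longrightarrow> sub t (p @ [1]) = Some a \<and> sub t (p @ [2]) = Some b"
  by (simp add: sub_append)

lemma sub_Leaf_append: "sub t p = Some (Leaf k) \<Longrightarrow> sub t (p @ q) = Some u \<Longrightarrow> q = [] \<and> u = Leaf k"
  by (cases q) (auto simp: sub_append)

lemma sub_prefix_defined: "sub t (p @ q) \<noteq> None \<Longrightarrow> sub t p \<noteq> None"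
  by (auto simp: sub_append split: option.splits)

lemma sub_append_Cons_Gate:
  "sub t (p @ j # r) \<noteq> None \<Longrightarrow> \<exists>g a b. sub t p = Some (Gate g a b) \<and> j \<in> {1,2}"
  using sub_prefix_defined[of t "p @ [j]" r] sub_snocD by fastforce

lemma leaves_sub_subset: "sub t p = Some u \<Longrightarrow> set (leaves u) \<subseteq> set (leaves t)"
  by (induction t arbitrary: p) (case_tac p; auto split: if_splits)+

lemma distinct_leaves_sub: "distinct (leaves t) \<Longrightarrow> sub t p = Some u \<Longrightarrow> distinct (leaves u)"
  by (induction t arbitrary: p) (case_tac p; auto split: if_splits)+

lemma sub_Leaf_in_leaves: "sub t p = Some (Leaf k) \<Longrightarrow> k \<in> set (leaves t)"
  using leaves_sub_subset by fastforce

lemma in_leaves_sub_Leaf: "k \<in> set (leaves t) \<Longrightarrow> \<exists>p. sub t p = Some (Leaf k)"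
proof (induction t)
  case (Leaf x) then show ?case by (intro exI[of _ "[]"]) auto
next
  case (Gate g a b)
  then consider p where "sub a p = Some (Leaf k)" | p where "sub b p = Some (Leaf k)" by auto
  then show ?case
  proof cases
    case 1 then show ?thesis by (intro exI[of _ "1 # p"]) auto
  next
    case 2 then show ?thesis by (intro exI[of _ "2 # p"]) auto
  qed
qed

lemma sub_Leaf_unique:
  "distinct (leaves t) \<Longrightarrow> sub t p = Some (Leaf k) \<Longrightarrow> sub t q = Some (Leaf k) \<Longrightarrow> p = q"
proof (induction t arbitrary: p q)
  case (Leaf x) then show ?case by (auto elim: sub.elims)
next
  case (Gate g a b)
  have "set (leaves a) \<inter> set (leaves b) = {}" using Gate.prems(1) by auto
  with Gate show ?case
    by (cases p; cases q) (auto split: if_splits dest!: sub_Leaf_in_leaves)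
qed

lemma leafpos_eq: "distinct (leaves \<phi>) \<Longrightarrow> sub \<phi> p = Some (Leaf k) \<Longrightarrow> leafpos \<phi> k = p"
  unfolding leafpos_def using sub_Leaf_unique by blast

lemma sub_leafpos:
  "distinct (leaves \<phi>) \<Longrightarrow> k \<in> set (leaves \<phi>) \<Longrightarrow> sub \<phi> (leafpos \<phi> k) = Some (Leaf k)"
  using in_leaves_sub_Leaf leafpos_eq by metis

lemma parent_closed_prefix: "(\<forall>p i. p @ [i] \<in> S \<longrightarrow> p \<in> S) \<Longrightarrow> p @ q \<in> S \<Longrightarrow> p \<in> S"
  by (induction q rule: rev_induct) (simp, metis append_assoc)

lemma evalf_mono: "(\<forall>k. y k \<longrightarrow> y' k) \<Longrightarrow> evalf t y \<Longrightarrow> evalf t y'"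
proof (induction t)
  case (Gate g a b) then show ?case by (cases g) auto
qed auto

lemma evalf_cong: "(\<forall>k\<in>set (leaves t). y k = y' k) \<Longrightarrow> evalf t y = evalf t y'"
proof (induction t)
  case (Gate g a b) then show ?case by (cases g) auto
qed auto

lemma evalf_False_leaf: "\<not> evalf t y \<Longrightarrow> \<exists>k\<in>set (leaves t). \<not> y k"
proof (induction t)
  case (Gate g a b) then show ?case by (cases g) auto
qed auto

lemma evalf_cong_sub:
  assumes "sub t r = Some u" "distinct (leaves t)" "evalf u y = evalf u y'"
    "\<forall>k\<in>set (leaves t) - set (leaves u). y k = y' k"
  shows "evalf t y = evalf t y'"
  using assms
proof (induction t arbitrary: r)
  case (Leaf x) then show ?case by (auto elim: sub.elims)
next
  case (Gate g a b)
  have dab: "set (leaves a) \<inter> set (leaves b) = {}" using Gate.prems(2) by auto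
  show ?case
  proof (cases r)
    case Nil then show ?thesis using Gate.prems by simp
  next
    case (Cons i r')
    show ?thesis
    proof (cases "i = 1")
      case True
      then have su: "sub a r' = Some u" using Gate.prems(1) Cons by simp
      have "evalf a y = evalf a y'" using Gate.IH(1)[OF su] Gate.prems by auto
      moreover have "evalf b y = evalf b y'"
        using evalf_cong[of b y y'] Gate.prems(4) leaves_sub_subset[OF su] dab by auto
      ultimately show ?thesis by (cases g) auto
    next
      case False
      then have su: "sub b r' = Some u" using Gate.prems(1) Cons by (simp split: if_splits)
      have "evalf b y = evalf b y'" using Gate.IH(2)[OF su] Gate.prems by auto
      moreover have "evalf a y = evalf a y'"
        using evalf_cong[of a y y'] Gate.prems(4) leaves_sub_subset[OF su] dab by auto
      ultimately show ?thesis by (cases g) auto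
    qed
  qed
qed

section \<open>The trees T_x of maximal false inputs\<close>

lemma Tx_okI:
  assumes "S \<subseteq> {p. sub \<phi> p \<noteq> None}" "[] \<in> S" "\<And>p i. p @ [i] \<in> S \<Longrightarrow> p \<in> S"
    "\<And>p k. sub \<phi> p = Some (Leaf k) \<Longrightarrow> (p \<in> S \<longleftrightarrow> \<not> x k)"
    "\<And>p a b. p \<in> S \<Longrightarrow> sub \<phi> p = Some (Gate OR a b) \<Longrightarrow> p @ [1] \<in> S \<and> p @ [2] \<in> S"
    "\<And>p a b. p \<in> S \<Longrightarrow> sub \<phi> p = Some (Gate AND a b) \<Longrightarrow> (p @ [1] \<in> S) \<noteq> (p @ [2] \<in> S)"
  shows "Tx_ok \<phi> x S"
  using assms unfolding Tx_ok_def by blast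

lemma Tx_okD:
  assumes "Tx_ok \<phi> x S"
  shows "S \<subseteq> {p. sub \<phi> p \<noteq> None}" "[] \<in> S" "\<And>p i. p @ [i] \<in> S \<Longrightarrow> p \<in> S"
    "\<And>p k. sub \<phi> p = Some (Leaf k) \<Longrightarrow> (p \<in> S \<longleftrightarrow> \<not> x k)"
    "\<And>p a b. p \<in> S \<Longrightarrow> sub \<phi> p = Some (Gate OR a b) \<Longrightarrow> p @ [1] \<in> S \<and> p @ [2] \<in> S"
    "\<And>p a b. p \<in> S \<Longrightarrow> sub \<phi> p = Some (Gate AND a b) \<Longrightarrow> (p @ [1] \<in> S) \<noteq> (p @ [2] \<in> S)"
  using assms unfolding Tx_ok_def by auto

lemma Tx_ok_not_evalf: "Tx_ok \<phi> x S \<Longrightarrow> p \<in> S \<Longrightarrow> sub \<phi> p = Some u \<Longrightarrow> \<not> evalf u x"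
proof (induction u arbitrary: p)
  case (Leaf k) then show ?case using Tx_okD(4) by auto
next
  case (Gate g a b)
  note children = sub_Gate_children[OF Gate.prems(3)]
  show ?case
  proof (cases g)
    case AND
    then have "p @ [1] \<in> S \<or> p @ [2] \<in> S" using Tx_okD(6)[OF Gate.prems(1,2)] Gate.prems(3) by blast
    then show ?thesis using Gate.IH children Gate.prems(1) AND by auto
  next
    case OR
    then have "p @ [1] \<in> S \<and> p @ [2] \<in> S" using Tx_okD(5)[OF Gate.prems(1,2)] Gate.prems(3) by blast
    then show ?thesis using Gate.IH children Gate.prems(1) OR by auto
  qed
qed

lemma Tx_ok_evalf_outside:
  "Tx_ok \<phi> x S \<Longrightarrow> (\<forall>k. x k \<longrightarrow> y k) \<Longrightarrow> p \<notin> S \<Longrightarrow> sub \<phi> p = Some u \<Longrightarrow> evalf u y"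
proof (induction u arbitrary: p)
  case (Leaf k) then show ?case using Tx_okD(4) by auto
next
  case (Gate g a b)
  have "p @ [1] \<notin> S" "p @ [2] \<notin> S" using Gate.prems(3) Tx_okD(3)[OF Gate.prems(1)] by blast+
  then show ?case using Gate.IH sub_Gate_children[OF Gate.prems(4)] Gate.prems(1,2) by (cases g) auto
qed

lemma Tx_ok_subset: "Tx_ok \<phi> x S1 \<Longrightarrow> Tx_ok \<phi> x S2 \<Longrightarrow> p \<in> S1 \<Longrightarrow> p \<in> S2"
proof (induction p rule: rev_induct)
  case Nil then show ?case using Tx_okD(2) by blast
next
  case (snoc i p)
  have "p \<in> S1" using Tx_okD(3)[OF snoc.prems(1,3)] .
  then have pS2: "p \<in> S2" using snoc by blast
  obtain u where u: "sub \<phi> (p @ [i]) = Some u" using Tx_okD(1)[OF snoc.prems(1)] snoc.prems(3) by auto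
  then obtain g a b where gab: "sub \<phi> p = Some (Gate g a b)" "i \<in> {1,2}"
    using sub_snocD by blast
  show ?case
  proof (cases g)
    case OR
    then show ?thesis using Tx_okD(5)[OF snoc.prems(2) pS2] gab by auto
  next
    case AND
    show ?thesis
    proof (rule ccontr)
      assume "p @ [i] \<notin> S2"
      then have "evalf u x" using Tx_ok_evalf_outside[OF snoc.prems(2) _ _ u] by auto
      then show False using Tx_ok_not_evalf[OF snoc.prems(1,3) u] by simp
    qed
  qed
qed

lemma Tx_eqI: "Tx_ok \<phi> x S \<Longrightarrow> Tx \<phi> x = S"
  unfolding Tx_def using Tx_ok_subset by (intro the_equality) blast+

lemma Tx_ok_flip_leaf:
  "Tx_ok \<phi> x S \<Longrightarrow> sub \<phi> p = Some u \<Longrightarrow> p @ q \<in> S \<Longrightarrow> sub \<phi> (p @ q) = Some (Leaf k) \<Longrightarrow>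
     evalf u (x(k := True))"
proof (induction u arbitrary: p q)
  case (Leaf k')
  then show ?case using sub_Leaf_append by fastforce
next
  case (Gate g a b)
  note children = sub_Gate_children[OF Gate.prems(2)]
  obtain i q' where q: "q = i # q'" using Gate.prems by (cases q) auto
  have i12: "i \<in> {1,2}" using sub_append_Cons_Gate[of \<phi> p i q'] Gate.prems q by auto
  have piS: "p @ [i] \<in> S"
    using parent_closed_prefix[of S "p @ [i]" q'] Tx_okD(3)[OF Gate.prems(1)] Gate.prems(3) q by auto
  have flipped: "evalf (if i = 1 then a else b) (x(k := True))"
  proof (cases "i = 1")
    case True
    then show ?thesis using Gate.IH(1)[OF Gate.prems(1), of "p @ [i]" q'] children Gate.prems(3,4) q
      by (simp add: fun_upd_def)
  next
    case False
    then have "i = 2" using i12 by simp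
    then show ?thesis using Gate.IH(2)[OF Gate.prems(1), of "p @ [i]" q'] children Gate.prems(3,4) q
      by (simp add: fun_upd_def)
  qed
  show ?case
  proof (cases g)
    case OR with flipped show ?thesis by (cases "i = 1") (simp_all del: fun_upd_apply)
  next
    case AND
    have "(p @ [1] \<in> S) \<noteq> (p @ [2] \<in> S)"
      using Tx_okD(6)[OF Gate.prems(1) Tx_okD(3)[OF Gate.prems(1) piS]] Gate.prems(2) AND by blast
    then have "p @ [3 - i] \<notin> S" using piS i12 by auto
    then have "evalf (if i = 1 then b else a) (x(k := True))"
      using Tx_ok_evalf_outside[OF Gate.prems(1)] children i12 by auto
    with flipped AND show ?thesis by (cases "i = 1") (simp_all del: fun_upd_apply)
  qed
qed

text \<open>For a maximal false input x this set is T_x.\<close>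
definition false_positions :: "form \<Rightarrow> (nat \<Rightarrow> bool) \<Rightarrow> nat list set" where
  "false_positions \<phi> x =
     {p. sub \<phi> p \<noteq> None \<and> (\<forall>q r u. p = q @ r \<longrightarrow> sub \<phi> q = Some u \<longrightarrow> \<not> evalf u x)}"

lemma false_positions_not_evalf: "p \<in> false_positions \<phi> x \<Longrightarrow> sub \<phi> p = Some u \<Longrightarrow> \<not> evalf u x"
  unfolding false_positions_def using append_Nil2 by blast

lemma false_positions_parent: "p @ [i] \<in> false_positions \<phi> x \<Longrightarrow> p \<in> false_positions \<phi> x"
  unfolding false_positions_def using sub_prefix_defined[of \<phi> p "[i]"] by (simp, metis append_assoc)

lemma false_positions_child:
  assumes pF: "p \<in> false_positions \<phi> x" and c: "sub \<phi> (p @ [i]) = Some c"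
  shows "p @ [i] \<in> false_positions \<phi> x \<longleftrightarrow> \<not> evalf c x"
proof
  assume "\<not> evalf c x"
  show "p @ [i] \<in> false_positions \<phi> x"
    unfolding false_positions_def
  proof (intro CollectI conjI allI impI)
    show "sub \<phi> (p @ [i]) \<noteq> None" using c by simp
    fix q r u assume qr: "p @ [i] = q @ r" and u: "sub \<phi> q = Some u"
    show "\<not> evalf u x"
    proof (cases r rule: rev_cases)
      case Nil then show ?thesis using qr u c \<open>\<not> evalf c x\<close> by simp
    next
      case (snoc r' j)
      then have "p = q @ r'" using qr by simp
      then show ?thesis using pF u unfolding false_positions_def by blast
    qed
  qed
qed (use false_positions_not_evalf[OF _ c] in blast)

lemma maxfalse_critical:
  assumes dist: "distinct (leaves \<phi>)" and x: "maxfalse \<phi> n x" and k: "k \<in> {1..n}" "\<not> x k"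
    and u: "sub \<phi> q = Some u" and ku: "k \<in> set (leaves u)"
  shows "\<not> evalf u x \<and> evalf u (x(k := True))"
proof (rule ccontr)
  assume "\<not> (\<not> evalf u x \<and> evalf u (x(k := True)))"
  moreover have "evalf u x \<Longrightarrow> evalf u (x(k := True))" by (erule evalf_mono[rotated]) simp
  ultimately have "evalf u (x(k := True)) = evalf u x" by blast
  then have "evalf \<phi> x = evalf \<phi> (x(k := True))"
    using evalf_cong_sub[OF u dist, of x "x(k := True)"] ku by auto
  then show False using x k unfolding maxfalse_def by auto
qed

lemma maxfalse_AND_child_true:
  assumes dist: "distinct (leaves \<phi>)" and lv: "set (leaves \<phi>) = {1..n}"
    and x: "maxfalse \<phi> n x" and g: "sub \<phi> q = Some (Gate AND a b)"
  shows "evalf a x \<or> evalf b x"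
proof (rule ccontr)
  assume neither: "\<not> (evalf a x \<or> evalf b x)"
  then obtain k where kb: "k \<in> set (leaves b)" "\<not> x k" using evalf_False_leaf by blast
  have "k \<notin> set (leaves a)" using distinct_leaves_sub[OF dist g] kb by auto
  then have "evalf a (x(k := True)) = evalf a x" by (intro evalf_cong) auto
  moreover have "k \<in> {1..n}" using leaves_sub_subset[OF g] kb lv by auto
  ultimately show False
    using maxfalse_critical[OF dist x _ kb(2) g] kb(1) neither by simp
qed

lemma maxfalse_Tx_ok:
  assumes dist: "distinct (leaves \<phi>)" and lv: "set (leaves \<phi>) = {1..n}"
    and r: "\<exists>g a b. \<phi> = Gate g a b" and x: "maxfalse \<phi> n x"
  shows "Tx_ok \<phi> x (false_positions \<phi> x)"
proof (rule Tx_okI)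
  let ?F = "false_positions \<phi> x"
  show "?F \<subseteq> {p. sub \<phi> p \<noteq> None}" unfolding false_positions_def by blast
  show "[] \<in> ?F" using x r unfolding false_positions_def maxfalse_def by auto
  show "p \<in> ?F" if "p @ [i] \<in> ?F" for p i using that by (rule false_positions_parent)
  fix p
  show "p \<in> ?F \<longleftrightarrow> \<not> x k" if pk: "sub \<phi> p = Some (Leaf k)" for k
  proof (rule iffI)
    assume "\<not> x k"
    moreover have "k \<in> {1..n}" using sub_Leaf_in_leaves[OF pk] lv by simp
    moreover have "k \<in> set (leaves u)" if "p = q @ r" "sub \<phi> q = Some u" for q r u
      using that pk sub_Leaf_in_leaves[of u r k] by (simp add: sub_append)
    ultimately show "p \<in> ?F"
      using maxfalse_critical[OF dist x] pk unfolding false_positions_def by blast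
  next
    assume "p \<in> ?F"
    from false_positions_not_evalf[OF this pk] show "\<not> x k" by simp
  qed
  fix a b
  assume pF: "p \<in> ?F"
  show "p @ [1] \<in> ?F \<and> p @ [2] \<in> ?F" if g: "sub \<phi> p = Some (Gate OR a b)"
  proof -
    have "\<not> evalf a x" "\<not> evalf b x" using false_positions_not_evalf[OF pF g] by auto
    then show ?thesis using false_positions_child[OF pF] sub_Gate_children[OF g] by blast
  qed
  show "(p @ [1] \<in> ?F) \<noteq> (p @ [2] \<in> ?F)" if g: "sub \<phi> p = Some (Gate AND a b)"
  proof -
    have "evalf a x \<or> evalf b x" using maxfalse_AND_child_true[OF dist lv x g] .
    moreover have "\<not> (evalf a x \<and> evalf b x)" using false_positions_not_evalf[OF pF g] by simp
    ultimately show ?thesis using false_positions_child[OF pF] sub_Gate_children[OF g] by blast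
  qed
qed

definition children :: "nat list set \<Rightarrow> nat list set" where
  "children C = {c @ [i] | c i. c \<in> C \<and> i \<in> {1,2}}"

text \<open>Trees shaped like T_x, but with the branching conditions imposed only at the gates in C.
  After the gates C have been composed, they index the basis of the span program.\<close>
definition partial_trees :: "form \<Rightarrow> nat list set \<Rightarrow> nat list set set" where
  "partial_trees \<phi> C = {S. S \<subseteq> C \<union> children C \<and> [] \<in> S \<and> (\<forall>p i. p @ [i] \<in> S \<longrightarrow> p \<in> S) \<and>
     (\<forall>p\<in>S \<inter> C. \<not> isAND \<phi> p \<longrightarrow> p @ [1] \<in> S \<and> p @ [2] \<in> S) \<and>
     (\<forall>p\<in>S \<inter> C. isAND \<phi> p \<longrightarrow> (p @ [1] \<in> S) \<noteq> (p @ [2] \<in> S))}"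

lemma partial_treesI:
  assumes "S \<subseteq> C \<union> children C" "[] \<in> S" "\<And>p i. p @ [i] \<in> S \<Longrightarrow> p \<in> S"
    "\<And>p. p \<in> S \<Longrightarrow> p \<in> C \<Longrightarrow> \<not> isAND \<phi> p \<Longrightarrow> p @ [1] \<in> S \<and> p @ [2] \<in> S"
    "\<And>p. p \<in> S \<Longrightarrow> p \<in> C \<Longrightarrow> isAND \<phi> p \<Longrightarrow> (p @ [1] \<in> S) \<noteq> (p @ [2] \<in> S)"
  shows "S \<in> partial_trees \<phi> C"
  unfolding partial_trees_def using assms by blast

lemma partial_treesD:
  assumes "S \<in> partial_trees \<phi> C"
  shows "S \<subseteq> C \<union> children C" "[] \<in> S" "\<And>p i. p @ [i] \<in> S \<Longrightarrow> p \<in> S"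
    "\<And>p. p \<in> S \<Longrightarrow> p \<in> C \<Longrightarrow> \<not> isAND \<phi> p \<Longrightarrow> p @ [1] \<in> S \<and> p @ [2] \<in> S"
    "\<And>p. p \<in> S \<Longrightarrow> p \<in> C \<Longrightarrow> isAND \<phi> p \<Longrightarrow> (p @ [1] \<in> S) \<noteq> (p @ [2] \<in> S)"
  using assms unfolding partial_trees_def by auto

lemma defined_positions_eq:
  assumes "\<exists>g a b. \<phi> = Gate g a b"
  shows "{p. sub \<phi> p \<noteq> None} = gates \<phi> \<union> children (gates \<phi>)"
proof (intro set_eqI iffI)
  fix p assume "p \<in> {p. sub \<phi> p \<noteq> None}"
  then obtain u where u: "sub \<phi> p = Some u" by auto
  show "p \<in> gates \<phi> \<union> children (gates \<phi>)"
  proof (cases p rule: rev_cases)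
    case Nil then show ?thesis using assms unfolding gates_def by auto
  next
    case (snoc q i)
    then obtain g a b where "sub \<phi> q = Some (Gate g a b)" "i \<in> {1,2}" using sub_snocD u by blast
    then show ?thesis using snoc unfolding gates_def children_def by blast
  qed
next
  fix p assume "p \<in> gates \<phi> \<union> children (gates \<phi>)"
  then show "p \<in> {p. sub \<phi> p \<noteq> None}"
    unfolding gates_def children_def by (auto dest: sub_Gate_children)
qed

lemma leafposs_eq: "\<exists>g a b. \<phi> = Gate g a b \<Longrightarrow> leafposs \<phi> = children (gates \<phi>) - gates \<phi>"
proof -
  assume r: "\<exists>g a b. \<phi> = Gate g a b"
  have "p \<in> leafposs \<phi> \<longleftrightarrow> sub \<phi> p \<noteq> None \<and> p \<notin> gates \<phi>" for p
    unfolding leafposs_def gates_def by (cases "sub \<phi> p") (auto, metis form.exhaust)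
  then show ?thesis using defined_positions_eq[OF r] by blast
qed

lemma Tx_ok_partial_tree:
  assumes r: "\<exists>g a b. \<phi> = Gate g a b" and t: "Tx_ok \<phi> x S"
  shows "S \<in> partial_trees \<phi> (gates \<phi>)"
proof (rule partial_treesI)
  show "S \<subseteq> gates \<phi> \<union> children (gates \<phi>)" using Tx_okD(1)[OF t] defined_positions_eq[OF r] by blast
  fix p assume p: "p \<in> S" "p \<in> gates \<phi>"
  then obtain g a b where g: "sub \<phi> p = Some (Gate g a b)" unfolding gates_def by blast
  show "\<not> isAND \<phi> p \<Longrightarrow> p @ [1] \<in> S \<and> p @ [2] \<in> S"
    using Tx_okD(5)[OF t p(1)] g unfolding isAND_def by (cases g) auto
  show "isAND \<phi> p \<Longrightarrow> (p @ [1] \<in> S) \<noteq> (p @ [2] \<in> S)"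
    using Tx_okD(6)[OF t p(1)] unfolding isAND_def by blast
qed (use Tx_okD[OF t] in auto)

definition tree_input :: "form \<Rightarrow> nat \<Rightarrow> nat list set \<Rightarrow> (nat \<Rightarrow> bool)" where
  "tree_input \<phi> n S = (\<lambda>k. k \<in> {1..n} \<and> leafpos \<phi> k \<notin> S)"

lemma partial_tree_Tx_ok:
  assumes dist: "distinct (leaves \<phi>)" and lv: "set (leaves \<phi>) = {1..n}"
    and r: "\<exists>g a b. \<phi> = Gate g a b" and S: "S \<in> partial_trees \<phi> (gates \<phi>)"
  shows "Tx_ok \<phi> (tree_input \<phi> n S) S"
proof (rule Tx_okI)
  note D = partial_treesD[OF S]
  show "S \<subseteq> {p. sub \<phi> p \<noteq> None}" using D(1) defined_positions_eq[OF r] by blast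
  show "p \<in> S \<longleftrightarrow> \<not> tree_input \<phi> n S k" if h: "sub \<phi> p = Some (Leaf k)" for p k
    using sub_Leaf_in_leaves[OF h] lv leafpos_eq[OF dist h] unfolding tree_input_def by simp
  fix p a b assume "p \<in> S"
  show "p @ [1] \<in> S \<and> p @ [2] \<in> S" if "sub \<phi> p = Some (Gate OR a b)"
    using D(4)[OF \<open>p \<in> S\<close>] that unfolding gates_def isAND_def by auto
  show "(p @ [1] \<in> S) \<noteq> (p @ [2] \<in> S)" if "sub \<phi> p = Some (Gate AND a b)"
    using D(5)[OF \<open>p \<in> S\<close>] that unfolding gates_def isAND_def by auto
qed (use partial_treesD[OF S] in auto)

lemma partial_tree_maxfalse:
  assumes dist: "distinct (leaves \<phi>)" and lv: "set (leaves \<phi>) = {1..n}"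
    and "\<exists>g a b. \<phi> = Gate g a b" and S: "S \<in> partial_trees \<phi> (gates \<phi>)"
  shows "tree_input \<phi> n S \<in> Uset \<phi> n"
proof -
  note t = partial_tree_Tx_ok[OF assms]
  have "evalf \<phi> ((tree_input \<phi> n S)(k := True))"
    if "k \<in> {1..n}" "\<not> tree_input \<phi> n S k" for k
    using Tx_ok_flip_leaf[OF t, of "[]" \<phi> "leafpos \<phi> k" k] sub_leafpos[OF dist] that lv
    unfolding tree_input_def by simp
  moreover have "\<not> evalf \<phi> (tree_input \<phi> n S)"
    using Tx_ok_not_evalf[OF t partial_treesD(2)[OF S]] by simp
  ultimately show ?thesis unfolding Uset_def maxfalse_def tree_input_def by auto
qed

lemma maxfalse_tree_input_Tx:
  assumes dist: "distinct (leaves \<phi>)" and lv: "set (leaves \<phi>) = {1..n}"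
    and "\<exists>g a b. \<phi> = Gate g a b" and x: "maxfalse \<phi> n x"
  shows "tree_input \<phi> n (Tx \<phi> x) = x"
proof
  fix k
  note t = maxfalse_Tx_ok[OF assms]
  show "tree_input \<phi> n (Tx \<phi> x) k = x k"
  proof (cases "k \<in> {1..n}")
    case True
    then show ?thesis
      using Tx_okD(4)[OF t sub_leafpos[OF dist]] lv Tx_eqI[OF t] unfolding tree_input_def by simp
  next
    case False then show ?thesis using x unfolding tree_input_def maxfalse_def by auto
  qed
qed

lemma bij_betw_tree_input:
  assumes "distinct (leaves \<phi>)" and "set (leaves \<phi>) = {1..n}"
    and r: "\<exists>g a b. \<phi> = Gate g a b"
  shows "bij_betw (tree_input \<phi> n) (partial_trees \<phi> (gates \<phi>)) (Uset \<phi> n)"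
proof (rule bij_betw_byWitness[where f' = "Tx \<phi>"])
  show "Tx \<phi> ` Uset \<phi> n \<subseteq> partial_trees \<phi> (gates \<phi>)"
    using Tx_ok_partial_tree[OF r] maxfalse_Tx_ok[OF assms] Tx_eqI unfolding Uset_def by force
qed (use partial_tree_maxfalse[OF assms] partial_tree_Tx_ok[OF assms] Tx_eqI
         maxfalse_tree_input_Tx[OF assms] in \<open>auto simp: Uset_def\<close>)

section \<open>Input labels and coefficient products\<close>

fun rev_pos_label :: "nat list \<Rightarrow> lab" where
  "rev_pos_label [] = L 0"
| "rev_pos_label [i] = L i"
| "rev_pos_label (i # j # r) = Pr (rev_pos_label (j # r)) (L i)"

text \<open>The index of the input vector of input p: composing at p turns input p @ [i] of the
  gate program, whose index is L i, into the index Pr (pos_label p) (L i).\<close>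
definition pos_label :: "nat list \<Rightarrow> lab" where
  "pos_label p = rev_pos_label (rev p)"

lemma pos_label_single [simp]: "pos_label [i] = L i"
  by (simp add: pos_label_def)

lemma pos_label_snoc: "p \<noteq> [] \<Longrightarrow> pos_label (p @ [i]) = Pr (pos_label p) (L i)"
  unfolding pos_label_def by (cases "rev p") auto

lemma rev_pos_label_inj: "rev_pos_label a = rev_pos_label b \<Longrightarrow> a \<noteq> [] \<Longrightarrow> b \<noteq> [] \<Longrightarrow> a = b"
  by (induction a arbitrary: b rule: rev_pos_label.induct; case_tac b rule: rev_pos_label.cases) auto

lemma pos_label_inj: "pos_label a = pos_label b \<Longrightarrow> a \<noteq> [] \<Longrightarrow> b \<noteq> [] \<Longrightarrow> a = b"
  unfolding pos_label_def using rev_pos_label_inj by fastforce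

definition ancestors :: "nat list \<Rightarrow> nat list set" where
  "ancestors p = {v. \<exists>q. q \<noteq> [] \<and> p = v @ q}"

lemma ancestors_Nil [simp]: "ancestors [] = {}"
  unfolding ancestors_def by auto

lemma ancestors_snoc: "ancestors (p @ [i]) = insert p (ancestors p)"
  unfolding ancestors_def by (auto simp: append_eq_append_conv2 Cons_eq_append_conv append_eq_Cons_conv)

lemma not_in_ancestors_self: "p \<notin> ancestors p"
  unfolding ancestors_def by auto

lemma ancestors_subset_parent_closed:
  assumes cl: "\<forall>q i. q @ [i] \<in> C \<longrightarrow> q \<in> C" and q: "q \<in> children C"
  shows "ancestors q \<subseteq> C"
proof
  fix v assume "v \<in> ancestors q"
  then obtain w where w: "w \<noteq> []" "q = v @ w" unfolding ancestors_def by blast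
  obtain c j where c: "q = c @ [j]" "c \<in> C" using q unfolding children_def by blast
  obtain w' where "c = v @ w'" using w c by (cases w rule: rev_cases) auto
  then show "v \<in> C" using parent_closed_prefix[of C v w'] cl c(2) by blast
qed

text \<open>The brace factors of tcoef and vcoef, with the branch j(x,v) of an AND gate read off
  from a tree S and the branch j(k,v) read off from the position p of the leaf. Then
  target_coef and input_coef are tcoef and vcoef with T_x replaced by a partial tree S and
  the set of all gates by the set C of composed gates.\<close>
definition in_brace :: "form \<Rightarrow> weights \<Rightarrow> nat list set \<Rightarrow> nat list \<Rightarrow> real" where
  "in_brace \<phi> s S v = (if isAND \<phi> v then alpha s v (if v @ [1] \<in> S then 1 else 2) else delta v)"

definition path_brace :: "form \<Rightarrow> weights \<Rightarrow> nat list \<Rightarrow> nat list \<Rightarrow> real" where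
  "path_brace \<phi> s p v = (if isAND \<phi> v then beta v (p ! length v) else eps s v (p ! length v))"

definition target_coef :: "form \<Rightarrow> weights \<Rightarrow> nat list set \<Rightarrow> nat list set \<Rightarrow> real" where
  "target_coef \<phi> s C S = (\<Prod>v\<in>C \<inter> S. in_brace \<phi> s S v) * (\<Prod>v\<in>C - S. brace_out \<phi> s v)"

definition input_coef :: "form \<Rightarrow> weights \<Rightarrow> nat list set \<Rightarrow> nat list \<Rightarrow> nat list set \<Rightarrow> real" where
  "input_coef \<phi> s C p S = (if p \<in> S then
     (\<Prod>v\<in>ancestors p. path_brace \<phi> s p v) * (\<Prod>v\<in>C \<inter> S - ancestors p. in_brace \<phi> s S v) *
     (\<Prod>v\<in>C - S. brace_out \<phi> s v) else 0)"

lemma alpha_pos: "s v 1 > 0 \<Longrightarrow> s v 2 > 0 \<Longrightarrow> j \<in> {1,2} \<Longrightarrow> alpha s v j > 0"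
  unfolding alpha_def by (auto intro: powr_gt_zero[THEN iffD2])

lemma eps_pos: "s v 1 > 0 \<Longrightarrow> s v 2 > 0 \<Longrightarrow> j \<in> {1,2} \<Longrightarrow> eps s v j > 0"
  unfolding eps_def by (auto intro: powr_gt_zero[THEN iffD2])

lemma alphatot_pos: "s v 1 > 0 \<Longrightarrow> s v 2 > 0 \<Longrightarrow> alphatot s v > 0"
  unfolding alphatot_def using alpha_pos[of s v 1] by (simp add: add_pos_nonneg)

lemma brace_out_pos: "s v 1 > 0 \<Longrightarrow> s v 2 > 0 \<Longrightarrow> brace_out \<phi> s v > 0"
  unfolding brace_out_def delta_def using alphatot_pos by simp

lemma in_brace_pos: "s v 1 > 0 \<Longrightarrow> s v 2 > 0 \<Longrightarrow> in_brace \<phi> s S v > 0"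
  unfolding in_brace_def delta_def using alpha_pos by simp

lemma path_brace_pos: "s v 1 > 0 \<Longrightarrow> s v 2 > 0 \<Longrightarrow> p ! length v \<in> {1,2} \<Longrightarrow> path_brace \<phi> s p v > 0"
  unfolding path_brace_def beta_def using eps_pos by simp

lemma target_coef_pos:
  "\<forall>v\<in>gates \<phi>. s v 1 > 0 \<and> s v 2 > 0 \<Longrightarrow> C \<subseteq> gates \<phi> \<Longrightarrow> target_coef \<phi> s C S > 0"
  unfolding target_coef_def by (intro mult_pos_pos prod_pos) (auto intro!: in_brace_pos brace_out_pos)

lemma input_coef_pos:
  assumes pos: "\<forall>v\<in>gates \<phi>. s v 1 > 0 \<and> s v 2 > 0" and C: "C \<subseteq> gates \<phi>"
    and anc: "ancestors p \<subseteq> C" and p: "sub \<phi> p \<noteq> None" "p \<in> S"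
  shows "input_coef \<phi> s C p S > 0"
proof -
  have "path_brace \<phi> s p v > 0" if v: "v \<in> ancestors p" for v
  proof -
    obtain q where "q \<noteq> []" "p = v @ q" using v unfolding ancestors_def by blast
    then obtain j w where p_eq: "p = v @ j # w" by (cases q) auto
    then have "j \<in> {1,2}" using sub_append_Cons_Gate[of \<phi> v j w] p(1) by simp
    moreover have "v \<in> gates \<phi>" using v anc C by blast
    ultimately show ?thesis using path_brace_pos pos p_eq by simp
  qed
  then have "(\<Prod>v\<in>ancestors p. path_brace \<phi> s p v) > 0" by (rule prod_pos)
  moreover have "(\<Prod>v\<in>C \<inter> S - ancestors p. in_brace \<phi> s S v) > 0"
    using pos C by (intro prod_pos) (auto intro!: in_brace_pos)
  moreover have "(\<Prod>v\<in>C - S. brace_out \<phi> s v) > 0"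
    using pos C by (intro prod_pos) (auto intro!: brace_out_pos)
  ultimately show ?thesis unfolding input_coef_def using p(2) by simp
qed

lemma target_coef_insert_in:
  assumes "finite C" "p \<notin> C" "p \<in> S'" "C \<inter> S' = C \<inter> S" "C - S' = C - S"
    "\<And>v. v \<in> C \<Longrightarrow> in_brace \<phi> s S' v = in_brace \<phi> s S v"
  shows "target_coef \<phi> s (insert p C) S' = target_coef \<phi> s C S * in_brace \<phi> s S' p"
proof -
  have "insert p C \<inter> S' = insert p (C \<inter> S)" "insert p C - S' = C - S" using assms by auto
  moreover have "(\<Prod>v\<in>C \<inter> S. in_brace \<phi> s S' v) = (\<Prod>v\<in>C \<inter> S. in_brace \<phi> s S v)"
    using assms by (intro prod.cong) auto
  ultimately show ?thesis unfolding target_coef_def using assms(1,2) by simp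
qed

lemma target_coef_insert_out:
  assumes "finite C" "p \<notin> C" "p \<notin> S"
  shows "target_coef \<phi> s (insert p C) S = target_coef \<phi> s C S * brace_out \<phi> s p"
proof -
  have "insert p C \<inter> S = C \<inter> S" "insert p C - S = insert p (C - S)" using assms by auto
  then show ?thesis unfolding target_coef_def using assms by simp
qed

lemma input_coef_insert_in:
  assumes "finite C" "p \<notin> C" "p \<in> S'" "C \<inter> S' = C \<inter> S" "C - S' = C - S"
    "\<And>v. v \<in> C \<Longrightarrow> in_brace \<phi> s S' v = in_brace \<phi> s S v" "p \<notin> ancestors q" "q \<in> S' \<longleftrightarrow> q \<in> S"
  shows "input_coef \<phi> s (insert p C) q S' = input_coef \<phi> s C q S * in_brace \<phi> s S' p"
proof -
  have "insert p C \<inter> S' - ancestors q = insert p (C \<inter> S - ancestors q)" "insert p C - S' = C - S"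
    using assms by auto
  moreover have "(\<Prod>v\<in>C \<inter> S - ancestors q. in_brace \<phi> s S' v) = (\<Prod>v\<in>C \<inter> S - ancestors q. in_brace \<phi> s S v)"
    using assms by (intro prod.cong) auto
  ultimately show ?thesis unfolding input_coef_def using assms(1,2,8) by simp
qed

lemma input_coef_insert_out:
  assumes "finite C" "p \<notin> C" "p \<notin> S" "p \<notin> ancestors q"
  shows "input_coef \<phi> s (insert p C) q S = input_coef \<phi> s C q S * brace_out \<phi> s p"
proof -
  have "insert p C \<inter> S - ancestors q = C \<inter> S - ancestors q" "insert p C - S = insert p (C - S)"
    using assms by auto
  then show ?thesis unfolding input_coef_def using assms by simp
qed

lemma input_coef_insert_child:
  assumes "finite C" "p \<notin> C" "p \<in> S" "p \<in> S'" "C \<inter> S' = C \<inter> S" "C - S' = C - S"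
    "\<And>v. v \<in> C \<Longrightarrow> in_brace \<phi> s S' v = in_brace \<phi> s S v" "ancestors p \<subseteq> C"
  shows "input_coef \<phi> s (insert p C) (p @ [i]) S' =
     (if p @ [i] \<in> S' then input_coef \<phi> s C p S * path_brace \<phi> s (p @ [i]) p else 0)"
proof -
  have "finite (ancestors p)" using assms(1,8) finite_subset by blast
  moreover have "path_brace \<phi> s (p @ [i]) v = path_brace \<phi> s p v" if "v \<in> ancestors p" for v
    using that unfolding ancestors_def path_brace_def by (auto simp: nth_append)
  ultimately have "(\<Prod>v\<in>ancestors (p @ [i]). path_brace \<phi> s (p @ [i]) v) =
      path_brace \<phi> s (p @ [i]) p * (\<Prod>v\<in>ancestors p. path_brace \<phi> s p v)"
    unfolding ancestors_snoc using not_in_ancestors_self by simp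
  moreover have "insert p C \<inter> S' - ancestors (p @ [i]) = C \<inter> S - ancestors p" "insert p C - S' = C - S"
    using assms unfolding ancestors_snoc by auto
  moreover have "(\<Prod>v\<in>C \<inter> S - ancestors p. in_brace \<phi> s S' v) = (\<Prod>v\<in>C \<inter> S - ancestors p. in_brace \<phi> s S v)"
    using assms by (intro prod.cong) auto
  ultimately show ?thesis unfolding input_coef_def using assms(3) by simp
qed

section \<open>Extending partial trees by a gate\<close>

definition child_choices :: "form \<Rightarrow> nat list \<Rightarrow> nat list set set" where
  "child_choices \<phi> p = (if isAND \<phi> p then {{p @ [1]}, {p @ [2]}} else {{p @ [1], p @ [2]}})"

lemma child_choices_subset: "K \<in> child_choices \<phi> p \<Longrightarrow> K \<subseteq> {p @ [1], p @ [2]}"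
  unfolding child_choices_def by (auto split: if_splits)

lemma children_insert: "children (insert p C) = children C \<union> {p @ [1], p @ [2]}"
  unfolding children_def by auto

lemma partial_tree_no_grandchild:
  assumes S: "S \<in> partial_trees \<phi> C" and cl: "\<forall>q i. q @ [i] \<in> C \<longrightarrow> q \<in> C" and p: "p \<notin> C"
  shows "p @ [i] \<notin> S"
  using partial_treesD(1)[OF S] cl p unfolding children_def by blast

lemma partial_tree_insert_out:
  assumes S: "S \<in> partial_trees \<phi> C" and p: "p \<notin> S"
  shows "S \<in> partial_trees \<phi> (insert p C)"
proof (rule partial_treesI)
  show "S \<subseteq> insert p C \<union> children (insert p C)"
    using partial_treesD(1)[OF S] unfolding children_insert by blast
qed (use partial_treesD[OF S] p in auto)

lemma partial_tree_insert_in: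
  assumes S: "S \<in> partial_trees \<phi> C" and pS: "p \<in> S" and pC: "p \<notin> C"
    and cl: "\<forall>q i. q @ [i] \<in> C \<longrightarrow> q \<in> C" and K: "K \<in> child_choices \<phi> p"
  shows "S \<union> K \<in> partial_trees \<phi> (insert p C)"
proof (rule partial_treesI)
  note D = partial_treesD[OF S]
  note K_sub = child_choices_subset[OF K]
  have K_parent: "q = p" if "q @ [i] \<in> K" for q i using that K_sub by auto
  have K_notC: "q \<notin> C" if "q \<in> K" for q using that K_sub cl pC by blast
  show "S \<union> K \<subseteq> insert p C \<union> children (insert p C)" using D(1) K_sub unfolding children_insert by blast
  show "q \<in> S \<union> K" if "q @ [i] \<in> S \<union> K" for q i using that D(3) K_parent pS by blast
  fix q assume q: "q \<in> S \<union> K" "q \<in> insert p C"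
  have p_children: "p @ [1] \<notin> S" "p @ [2] \<notin> S" using partial_tree_no_grandchild[OF S cl pC] by auto
  show "q @ [1] \<in> S \<union> K \<and> q @ [2] \<in> S \<union> K" if "\<not> isAND \<phi> q"
  proof (cases "q = p")
    case True then show ?thesis using K that unfolding child_choices_def by simp
  next
    case False then show ?thesis using D(4) that q K_notC by blast
  qed
  show "(q @ [1] \<in> S \<union> K) \<noteq> (q @ [2] \<in> S \<union> K)" if "isAND \<phi> q"
  proof (cases "q = p")
    case True then show ?thesis using K that p_children unfolding child_choices_def by auto
  next
    case False
    then have "q \<in> C" "q \<in> S" using q K_notC by auto
    moreover have "q @ [j] \<in> S \<union> K \<longleftrightarrow> q @ [j] \<in> S" for j using K_parent False by blast
    ultimately show ?thesis using D(5) that by blast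
  qed
qed (use partial_treesD(2)[OF S] in blast)

lemma partial_tree_restrict:
  assumes S': "S' \<in> partial_trees \<phi> (insert p C)" and cl: "\<forall>q i. q @ [i] \<in> C \<longrightarrow> q \<in> C"
    and pC: "p \<in> children C" "p \<notin> C"
  shows "S' - {p @ [1], p @ [2]} \<in> partial_trees \<phi> C"
    and "p \<notin> S' \<Longrightarrow> S' \<inter> {p @ [1], p @ [2]} = {}"
    and "p \<in> S' \<Longrightarrow> S' \<inter> {p @ [1], p @ [2]} \<in> child_choices \<phi> p"
proof -
  note D = partial_treesD[OF S']
  let ?K = "{p @ [1], p @ [2]}"
  have below: "S' \<subseteq> insert p C \<union> children C \<union> ?K" using D(1) children_insert by blast
  have no_grandchild: "(p @ [j]) @ [i] \<notin> S'" for j i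
  proof -
    have "p @ [j] \<notin> C" using cl pC(2) by blast
    then have "(p @ [j]) @ [i] \<notin> C \<union> children C" using cl unfolding children_def by blast
    then show ?thesis using below by auto
  qed
  show "S' - ?K \<in> partial_trees \<phi> C"
  proof (rule partial_treesI)
    show "S' - ?K \<subseteq> C \<union> children C" using below pC(1) by blast
    show "q \<in> S' - ?K" if "q @ [i] \<in> S' - ?K" for q i
      using that D(3) no_grandchild by auto
    fix q assume q: "q \<in> S' - ?K" "q \<in> C"
    then have "q @ [i] \<in> S' - ?K \<longleftrightarrow> q @ [i] \<in> S'" for i using pC(2) by auto
    then show "\<not> isAND \<phi> q \<Longrightarrow> q @ [1] \<in> S' - ?K \<and> q @ [2] \<in> S' - ?K"
      and "isAND \<phi> q \<Longrightarrow> (q @ [1] \<in> S' - ?K) \<noteq> (q @ [2] \<in> S' - ?K)"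
      using D(4)[of q] D(5)[of q] q by blast+
  qed (use D(2) in simp)
  show "p \<notin> S' \<Longrightarrow> S' \<inter> ?K = {}" using D(3) by blast
  show "p \<in> S' \<Longrightarrow> S' \<inter> ?K \<in> child_choices \<phi> p"
    using D(4)[of p] D(5)[of p] unfolding child_choices_def by auto
qed

lemma union_child_choice_cancel:
  assumes "S \<inter> {p @ [1], p @ [2]} = {}" "S' \<inter> {p @ [1], p @ [2]} = {}"
    "K \<subseteq> {p @ [1], p @ [2]}" "K' \<subseteq> {p @ [1], p @ [2]}" "S \<union> K = S' \<union> K'"
  shows "S = S' \<and> K = K'"
proof -
  have "S = (S \<union> K) - {p @ [1], p @ [2]}" "S' = (S' \<union> K') - {p @ [1], p @ [2]}"
    "K = (S \<union> K) \<inter> {p @ [1], p @ [2]}" "K' = (S' \<union> K') \<inter> {p @ [1], p @ [2]}"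
    using assms(1-4) by blast+
  then show ?thesis using assms(5) by simp
qed

lemma partial_trees_insert:
  assumes cl: "\<forall>q i. q @ [i] \<in> C \<longrightarrow> q \<in> C" and pC: "p \<in> children C" "p \<notin> C"
  shows "partial_trees \<phi> (insert p C) = {S \<in> partial_trees \<phi> C. p \<notin> S} \<union>
           {S \<union> K | S K. S \<in> partial_trees \<phi> C \<and> p \<in> S \<and> K \<in> child_choices \<phi> p}"
proof (intro set_eqI iffI)
  fix S' assume S': "S' \<in> partial_trees \<phi> (insert p C)"
  note R = partial_tree_restrict[OF S' cl pC]
  let ?K = "{p @ [1], p @ [2]}"
  show "S' \<in> {S \<in> partial_trees \<phi> C. p \<notin> S} \<union>
           {S \<union> K | S K. S \<in> partial_trees \<phi> C \<and> p \<in> S \<and> K \<in> child_choices \<phi> p}"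
  proof (cases "p \<in> S'")
    case False
    then have "S' = S' - ?K" using R(2) by blast
    then show ?thesis using R(1) False by auto
  next
    case True
    then have "S' = (S' - ?K) \<union> (S' \<inter> ?K)" "p \<in> S' - ?K" by auto
    then show ?thesis using R(1) R(3)[OF True] by blast
  qed
next
  fix S' assume "S' \<in> {S \<in> partial_trees \<phi> C. p \<notin> S} \<union>
           {S \<union> K | S K. S \<in> partial_trees \<phi> C \<and> p \<in> S \<and> K \<in> child_choices \<phi> p}"
  then show "S' \<in> partial_trees \<phi> (insert p C)"
    using partial_tree_insert_out partial_tree_insert_in[OF _ _ pC(2) cl] by blast
qed

lemma partial_trees_root: "partial_trees \<phi> {[]} = insert [] ` child_choices \<phi> []"
proof (intro set_eqI iffI)
  fix S assume S: "S \<in> partial_trees \<phi> {[]}"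
  have "S \<subseteq> {[], [1], [2]}" using partial_treesD(1)[OF S] unfolding children_def by auto
  then have "S = insert [] (S \<inter> {[1], [2]})" using partial_treesD(2)[OF S] by auto
  moreover have "S \<inter> {[1], [2]} \<in> child_choices \<phi> []"
    using partial_treesD(2,4,5)[OF S] unfolding child_choices_def by auto
  ultimately show "S \<in> insert [] ` child_choices \<phi> []" by blast
next
  fix S assume "S \<in> insert [] ` child_choices \<phi> []"
  then obtain K where K: "K \<in> child_choices \<phi> []" "S = insert [] K" by blast
  show "S \<in> partial_trees \<phi> {[]}"
  proof (rule partial_treesI)
    show "S \<subseteq> {[]} \<union> children {[]}" using child_choices_subset[OF K(1)] K(2) unfolding children_def by auto
    show "p \<in> S" if "p @ [i] \<in> S" for p i using that child_choices_subset[OF K(1)] K(2) by auto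
  qed (use K in \<open>auto simp: child_choices_def split: if_splits\<close>)
qed

section \<open>Gate programs and the composition invariant\<close>

lemma gateprog_inputs: "sp_inputs (gateprog \<phi> s p) = {p @ [1], p @ [2]}"
  by (simp add: gateprog_def)

lemma gateprog_idx:
  "sp_idx (gateprog \<phi> s p) q = (if q = p @ [1] then {L 1} else if q = p @ [2] then {L 2} else {})"
  by (simp add: gateprog_def)

lemma gateprog_basis: "sp_basis (gateprog \<phi> s p) = (if isAND \<phi> p then {L 1, L 2} else {L 1})"
  by (simp add: gateprog_def)

lemma gateprog_target_norm: "nrm (gateprog \<phi> s p) (sp_target (gateprog \<phi> s p)) = brace_out \<phi> s p"
  by (simp add: nrm_def gateprog_def brace_out_def alphatot_def delta_def)

text \<open>Basis vector L j of an AND gate program selects child j; the single basis vector of an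
  OR gate program selects both children.\<close>
definition chosen_children :: "form \<Rightarrow> nat list \<Rightarrow> lab \<Rightarrow> nat list set" where
  "chosen_children \<phi> p b =
     (if isAND \<phi> p then {p @ [if b = L 1 then 1 else 2]} else {p @ [1], p @ [2]})"

lemma chosen_children_subset: "chosen_children \<phi> p b \<subseteq> {p @ [1], p @ [2]}"
  unfolding chosen_children_def by auto

lemma bij_betw_chosen_children:
  "bij_betw (chosen_children \<phi> p) (sp_basis (gateprog \<phi> s p)) (child_choices \<phi> p)"
proof (cases "isAND \<phi> p")
  case True
  have "{p @ [1]} \<noteq> {p @ [2]}" by simp
  with True show ?thesis
    unfolding bij_betw_def inj_on_def gateprog_basis chosen_children_def child_choices_def by auto
qed (simp add: bij_betw_def gateprog_basis chosen_children_def child_choices_def)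

lemma gateprog_target:
  assumes "b \<in> sp_basis (gateprog \<phi> s p)" "p @ [1] \<notin> S"
  shows "sp_target (gateprog \<phi> s p) b = complex_of_real (in_brace \<phi> s (S \<union> chosen_children \<phi> p b) p)"
proof (cases "isAND \<phi> p")
  case True
  then consider "b = L 1" | "b = L 2" using assms(1) by (auto simp: gateprog_basis)
  then show ?thesis using True assms(2) by cases (simp_all add: gateprog_def in_brace_def chosen_children_def)
next
  case False
  then show ?thesis using assms(1) by (simp add: gateprog_def in_brace_def)
qed

lemma gateprog_vec:
  assumes "b \<in> sp_basis (gateprog \<phi> s p)" "i \<in> {1,2}" "p @ [i] \<notin> S"
  shows "sp_vec (gateprog \<phi> s p) (L i) b =
    (if p @ [i] \<in> S \<union> chosen_children \<phi> p b then complex_of_real (path_brace \<phi> s (p @ [i]) p) else 0)"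
proof (cases "isAND \<phi> p")
  case True
  then consider "b = L 1" | "b = L 2" using assms(1) by (auto simp: gateprog_basis)
  then show ?thesis using True assms(2,3)
    by cases (auto simp: gateprog_def path_brace_def chosen_children_def)
next
  case False
  then show ?thesis using assms by (auto simp: gateprog_def path_brace_def chosen_children_def)
qed

definition composition_invariant ::
    "form \<Rightarrow> weights \<Rightarrow> sprog \<Rightarrow> nat list set \<Rightarrow> (lab \<Rightarrow> nat list set) \<Rightarrow> bool" where
  "composition_invariant \<phi> s P C \<sigma> \<longleftrightarrow>
     finite (sp_basis P) \<and> finite C \<and> C \<subseteq> gates \<phi> \<and> [] \<in> C \<and>
     (\<forall>p i. p @ [i] \<in> C \<longrightarrow> p \<in> C) \<and> sp_inputs P = children C - C \<and>
     bij_betw \<sigma> (sp_basis P) (partial_trees \<phi> C) \<and>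
     (\<forall>b\<in>sp_basis P. sp_target P b = complex_of_real (target_coef \<phi> s C (\<sigma> b))) \<and>
     (\<forall>p\<in>sp_inputs P. sp_idx P p = {pos_label p} \<and>
        (\<forall>b\<in>sp_basis P. sp_vec P (pos_label p) b = complex_of_real (input_coef \<phi> s C p (\<sigma> b))))"

lemma composition_invariantD:
  assumes "composition_invariant \<phi> s P C \<sigma>"
  shows "finite (sp_basis P)" "finite C" "C \<subseteq> gates \<phi>" "[] \<in> C"
    "\<forall>q i. q @ [i] \<in> C \<longrightarrow> q \<in> C" "sp_inputs P = children C - C"
    "bij_betw \<sigma> (sp_basis P) (partial_trees \<phi> C)"
    "\<And>l. l \<in> sp_basis P \<Longrightarrow> sp_target P l = complex_of_real (target_coef \<phi> s C (\<sigma> l))"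
    "\<And>q. q \<in> sp_inputs P \<Longrightarrow> sp_idx P q = {pos_label q}"
    "\<And>q l. q \<in> sp_inputs P \<Longrightarrow> l \<in> sp_basis P \<Longrightarrow>
      sp_vec P (pos_label q) l = complex_of_real (input_coef \<phi> s C q (\<sigma> l))"
  using assms unfolding composition_invariant_def by blast+

lemma composition_invariant_root:
  assumes "[] \<in> gates \<phi>"
  shows "composition_invariant \<phi> s (gateprog \<phi> s []) {[]} (\<lambda>b. insert [] (chosen_children \<phi> [] b))"
proof -
  let ?P = "gateprog \<phi> s []" and ?\<sigma> = "\<lambda>b. insert [] (chosen_children \<phi> [] b)"
  have "inj_on (insert []) (child_choices \<phi> [])"
  proof (rule inj_onI)
    fix K K' assume K: "K \<in> child_choices \<phi> []" "K' \<in> child_choices \<phi> []" "insert [] K = insert [] K'"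
    have "[] \<notin> K" "[] \<notin> K'" using child_choices_subset[OF K(1)] child_choices_subset[OF K(2)] by auto
    then show "K = K'" using K(3) by (simp add: insert_ident)
  qed
  then have "bij_betw (insert []) (child_choices \<phi> []) (partial_trees \<phi> {[]})"
    unfolding partial_trees_root by (rule bij_betw_imageI) simp
  then have bij: "bij_betw ?\<sigma> (sp_basis ?P) (partial_trees \<phi> {[]})"
    using bij_betw_trans[OF bij_betw_chosen_children] by (simp add: comp_def)
  have inputs: "sp_inputs ?P = children {[]} - {[]}"
    unfolding gateprog_inputs children_def by auto
  have target: "sp_target ?P b = complex_of_real (target_coef \<phi> s {[]} (?\<sigma> b))"
    if b: "b \<in> sp_basis ?P" for b
  proof -
    have "target_coef \<phi> s {[]} (?\<sigma> b) = in_brace \<phi> s ({[]} \<union> chosen_children \<phi> [] b) []"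
      unfolding target_coef_def by simp
    then show ?thesis using gateprog_target[OF b, of "{[]}"] by simp
  qed
  have vec: "sp_vec ?P (pos_label [i]) b = complex_of_real (input_coef \<phi> s {[]} [i] (?\<sigma> b))"
    if b: "b \<in> sp_basis ?P" and i: "i \<in> {1,2}" for b i
  proof -
    have "input_coef \<phi> s {[]} [i] (?\<sigma> b) =
        (if [i] \<in> {[]} \<union> chosen_children \<phi> [] b then path_brace \<phi> s [i] [] else 0)"
      unfolding input_coef_def using ancestors_snoc[of "[]" i] by simp
    then show ?thesis using gateprog_vec[OF b i, of "{[]}"] by simp
  qed
  have "sp_idx ?P q = {pos_label q} \<and>
      (\<forall>b\<in>sp_basis ?P. sp_vec ?P (pos_label q) b = complex_of_real (input_coef \<phi> s {[]} q (?\<sigma> b)))"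
    if "q \<in> sp_inputs ?P" for q
    using that vec unfolding gateprog_inputs gateprog_idx by auto
  then show ?thesis
    unfolding composition_invariant_def using assms bij inputs target by (simp add: gateprog_basis)
qed

section \<open>One composition step\<close>

definition zero_rows :: "sprog \<Rightarrow> nat list \<Rightarrow> lab set" where
  "zero_rows P j = {l \<in> sp_basis P. \<forall>i\<in>sp_idx P j. sp_vec P i l = 0}"

definition new_index :: "sprog \<Rightarrow> nat list \<Rightarrow> sprog \<Rightarrow> lab \<Rightarrow> bool" where
  "new_index Q j P i \<longleftrightarrow>
     (\<exists>a a' k. i = Pr a a' \<and> a \<in> sp_idx P j \<and> k \<in> sp_inputs Q \<and> a' \<in> sp_idx Q k)"

lemma compose_simps:
  "sp_basis (compose Q j P) =
     {Pr l b | l b. l \<in> sp_basis P - zero_rows P j \<and> b \<in> sp_basis Q} \<union> Zl ` zero_rows P j"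
  "sp_target (compose Q j P) c = (case c of Pr l b \<Rightarrow> sp_target P l * sp_target Q b
      | Zl l \<Rightarrow> sp_target P l * complex_of_real (nrm Q (sp_target Q)) | L _ \<Rightarrow> 0)"
  "sp_inputs (compose Q j P) = (sp_inputs P - {j}) \<union> sp_inputs Q"
  "sp_idx (compose Q j P) k = (if k \<in> sp_inputs Q then {Pr a a' | a a'. a \<in> sp_idx P j \<and> a' \<in> sp_idx Q k}
      else if k = j then {} else sp_idx P k)"
  "sp_vec (compose Q j P) i c = (if new_index Q j P i then
        (case i of Pr a a' \<Rightarrow> (case c of Pr l b \<Rightarrow> sp_vec P a l * sp_vec Q a' b | _ \<Rightarrow> 0) | _ \<Rightarrow> 0)
      else (case c of Pr l b \<Rightarrow> sp_vec P i l * sp_target Q b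
             | Zl l \<Rightarrow> sp_vec P i l * complex_of_real (nrm Q (sp_target Q)) | L _ \<Rightarrow> 0))"
  unfolding compose_def Let_def zero_rows_def new_index_def by simp_all

locale gate_composition =
  fixes \<phi> :: form and s :: weights and P :: sprog and C :: "nat list set"
    and \<sigma> :: "lab \<Rightarrow> nat list set" and p :: "nat list"
  assumes weights_pos: "\<forall>v\<in>gates \<phi>. s v 1 > 0 \<and> s v 2 > 0"
    and invariant: "composition_invariant \<phi> s P C \<sigma>"
    and p_input: "p \<in> sp_inputs P" and p_gate: "p \<in> gates \<phi>"
begin

abbreviation Q :: sprog where "Q \<equiv> gateprog \<phi> s p"

lemma finite_basis: "finite (sp_basis P)"
  and finite_C: "finite C" and C_gates: "C \<subseteq> gates \<phi>" and root_in_C: "[] \<in> C"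
  and C_closed: "\<forall>q i. q @ [i] \<in> C \<longrightarrow> q \<in> C" and inputs_eq: "sp_inputs P = children C - C"
  and bij_\<sigma>: "bij_betw \<sigma> (sp_basis P) (partial_trees \<phi> C)"
  and target_eq: "\<And>l. l \<in> sp_basis P \<Longrightarrow> sp_target P l = complex_of_real (target_coef \<phi> s C (\<sigma> l))"
  and idx_eq: "\<And>q. q \<in> sp_inputs P \<Longrightarrow> sp_idx P q = {pos_label q}"
  and vec_eq: "\<And>q l. q \<in> sp_inputs P \<Longrightarrow> l \<in> sp_basis P \<Longrightarrow>
      sp_vec P (pos_label q) l = complex_of_real (input_coef \<phi> s C q (\<sigma> l))"
  using invariant unfolding composition_invariant_def by blast+

lemma p_child: "p \<in> children C" and p_notin_C: "p \<notin> C" and p_nonempty: "p \<noteq> []"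
  using p_input inputs_eq unfolding children_def by auto

lemma tree_in_partial_trees: "l \<in> sp_basis P \<Longrightarrow> \<sigma> l \<in> partial_trees \<phi> C"
  using bij_\<sigma> unfolding bij_betw_def by blast

lemma child_of_p_notin_tree: "l \<in> sp_basis P \<Longrightarrow> p @ [i] \<notin> \<sigma> l"
  using partial_tree_no_grandchild[OF tree_in_partial_trees C_closed p_notin_C] .

text \<open>Input coefficients are positive on the tree, so the rows vanishing on input p are
  exactly those whose tree does not contain p.\<close>
lemma zero_rows_eq: "zero_rows P p = {l \<in> sp_basis P. p \<notin> \<sigma> l}"
proof -
  have "input_coef \<phi> s C p (\<sigma> l) = 0 \<longleftrightarrow> p \<notin> \<sigma> l" for l
    using input_coef_pos[OF weights_pos C_gates ancestors_subset_parent_closed[OF C_closed p_child]]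
      p_gate unfolding gates_def input_coef_def by fastforce
  then show ?thesis unfolding zero_rows_def using idx_eq[OF p_input] vec_eq[OF p_input] by auto
qed

lemma basis_compose:
  "sp_basis (compose Q p P) =
     Zl ` {l \<in> sp_basis P. p \<notin> \<sigma> l} \<union> {Pr l b | l b. l \<in> sp_basis P \<and> p \<in> \<sigma> l \<and> b \<in> sp_basis Q}"
  unfolding compose_simps zero_rows_eq by auto

lemma basis_compose_cases:
  assumes "c \<in> sp_basis (compose Q p P)"
  obtains (Zl) l where "c = Zl l" "l \<in> sp_basis P" "p \<notin> \<sigma> l"
    | (Pr) l b where "c = Pr l b" "l \<in> sp_basis P" "p \<in> \<sigma> l" "b \<in> sp_basis Q"
  using assms unfolding basis_compose by blast

definition composed_tree :: "lab \<Rightarrow> nat list set" where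
  "composed_tree c = (case c of Pr l b \<Rightarrow> \<sigma> l \<union> chosen_children \<phi> p b | Zl l \<Rightarrow> \<sigma> l | L _ \<Rightarrow> {})"

lemma extended_tree_on_C:
  shows "C \<inter> (\<sigma> l \<union> chosen_children \<phi> p b) = C \<inter> \<sigma> l"
    and "C - (\<sigma> l \<union> chosen_children \<phi> p b) = C - \<sigma> l"
    and "v \<in> C \<Longrightarrow> in_brace \<phi> s (\<sigma> l \<union> chosen_children \<phi> p b) v = in_brace \<phi> s (\<sigma> l) v"
proof -
  have "p @ [j] \<notin> C" for j using C_closed p_notin_C by blast
  then have "C \<inter> chosen_children \<phi> p b = {}" using chosen_children_subset by blast
  then show "C \<inter> (\<sigma> l \<union> chosen_children \<phi> p b) = C \<inter> \<sigma> l"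
    and "C - (\<sigma> l \<union> chosen_children \<phi> p b) = C - \<sigma> l" by blast+
  assume "v \<in> C"
  then have "v @ [1] \<notin> chosen_children \<phi> p b" using chosen_children_subset p_notin_C by fastforce
  then show "in_brace \<phi> s (\<sigma> l \<union> chosen_children \<phi> p b) v = in_brace \<phi> s (\<sigma> l) v"
    unfolding in_brace_def by simp
qed

lemma inj_on_\<sigma>: "inj_on \<sigma> (sp_basis P)" and image_\<sigma>: "\<sigma> ` sp_basis P = partial_trees \<phi> C"
  using bij_\<sigma> unfolding bij_betw_def by blast+

lemma bij_composed_tree_Zl:
  "bij_betw composed_tree (Zl ` {l \<in> sp_basis P. p \<notin> \<sigma> l}) {S \<in> partial_trees \<phi> C. p \<notin> S}"
proof (rule bij_betw_imageI)
  show "inj_on composed_tree (Zl ` {l \<in> sp_basis P. p \<notin> \<sigma> l})"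
    using inj_on_\<sigma> unfolding inj_on_def composed_tree_def by auto
  have "composed_tree ` Zl ` {l \<in> sp_basis P. p \<notin> \<sigma> l} = \<sigma> ` {l \<in> sp_basis P. p \<notin> \<sigma> l}"
    unfolding image_image composed_tree_def by simp
  also have "\<dots> = {S \<in> partial_trees \<phi> C. p \<notin> S}" unfolding image_\<sigma>[symmetric] by blast
  finally show "composed_tree ` Zl ` {l \<in> sp_basis P. p \<notin> \<sigma> l} = {S \<in> partial_trees \<phi> C. p \<notin> S}" .
qed

lemma inj_on_composed_tree_Pr:
  "inj_on composed_tree {Pr l b | l b. l \<in> sp_basis P \<and> p \<in> \<sigma> l \<and> b \<in> sp_basis Q}"
proof (rule inj_onI)
  fix x y
  assume "x \<in> {Pr l b | l b. l \<in> sp_basis P \<and> p \<in> \<sigma> l \<and> b \<in> sp_basis Q}"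
    and "y \<in> {Pr l b | l b. l \<in> sp_basis P \<and> p \<in> \<sigma> l \<and> b \<in> sp_basis Q}"
  then obtain l b l' b' where x: "x = Pr l b" "l \<in> sp_basis P" "b \<in> sp_basis Q"
    and y: "y = Pr l' b'" "l' \<in> sp_basis P" "b' \<in> sp_basis Q" by blast
  assume "composed_tree x = composed_tree y"
  then have eq: "\<sigma> l \<union> chosen_children \<phi> p b = \<sigma> l' \<union> chosen_children \<phi> p b'"
    using x y unfolding composed_tree_def by simp
  have "\<sigma> l \<inter> {p @ [1], p @ [2]} = {}" "\<sigma> l' \<inter> {p @ [1], p @ [2]} = {}"
    using child_of_p_notin_tree[OF x(2)] child_of_p_notin_tree[OF y(2)] by auto
  from union_child_choice_cancel[OF this chosen_children_subset chosen_children_subset eq]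
  have "\<sigma> l = \<sigma> l'" "chosen_children \<phi> p b = chosen_children \<phi> p b'" by auto
  then show "x = y"
    using x y inj_onD[OF inj_on_\<sigma>] inj_onD[OF bij_betw_imp_inj_on[OF bij_betw_chosen_children]]
    by simp
qed

lemma image_composed_tree_Pr:
  "composed_tree ` {Pr l b | l b. l \<in> sp_basis P \<and> p \<in> \<sigma> l \<and> b \<in> sp_basis Q} =
    {S \<union> K | S K. S \<in> partial_trees \<phi> C \<and> p \<in> S \<and> K \<in> child_choices \<phi> p}"
proof (intro set_eqI iffI)
  fix S' assume "S' \<in> composed_tree ` {Pr l b | l b. l \<in> sp_basis P \<and> p \<in> \<sigma> l \<and> b \<in> sp_basis Q}"
  then obtain l b where lb: "S' = composed_tree (Pr l b)" "l \<in> sp_basis P" "p \<in> \<sigma> l" "b \<in> sp_basis Q"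
    by blast
  then have "\<sigma> l \<in> partial_trees \<phi> C" "chosen_children \<phi> p b \<in> child_choices \<phi> p"
    using tree_in_partial_trees bij_betw_apply[OF bij_betw_chosen_children] by blast+
  moreover have "S' = \<sigma> l \<union> chosen_children \<phi> p b" using lb(1) by (simp add: composed_tree_def)
  ultimately show "S' \<in> {S \<union> K | S K. S \<in> partial_trees \<phi> C \<and> p \<in> S \<and> K \<in> child_choices \<phi> p}"
    using lb(3) by blast
next
  fix S' assume "S' \<in> {S \<union> K | S K. S \<in> partial_trees \<phi> C \<and> p \<in> S \<and> K \<in> child_choices \<phi> p}"
  then obtain S K where S': "S' = S \<union> K" "S \<in> partial_trees \<phi> C" "p \<in> S" "K \<in> child_choices \<phi> p"
    by blast
  obtain l where l: "l \<in> sp_basis P" "\<sigma> l = S" using S'(2) unfolding image_\<sigma>[symmetric] by blast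
  obtain b where b: "b \<in> sp_basis Q" "chosen_children \<phi> p b = K"
    using S'(4) unfolding bij_betw_imp_surj_on[OF bij_betw_chosen_children[where s = s], symmetric] by blast
  have "S' = composed_tree (Pr l b)" using S'(1) l(2) b(2) by (simp add: composed_tree_def)
  moreover have "Pr l b \<in> {Pr l b | l b. l \<in> sp_basis P \<and> p \<in> \<sigma> l \<and> b \<in> sp_basis Q}"
    using l b S'(3) by blast
  ultimately show "S' \<in> composed_tree ` {Pr l b | l b. l \<in> sp_basis P \<and> p \<in> \<sigma> l \<and> b \<in> sp_basis Q}"
    by blast
qed

lemma bij_composed_tree_Pr:
  "bij_betw composed_tree {Pr l b | l b. l \<in> sp_basis P \<and> p \<in> \<sigma> l \<and> b \<in> sp_basis Q}
    {S \<union> K | S K. S \<in> partial_trees \<phi> C \<and> p \<in> S \<and> K \<in> child_choices \<phi> p}"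
  using inj_on_composed_tree_Pr image_composed_tree_Pr by (rule bij_betw_imageI)

lemma bij_compose: "bij_betw composed_tree (sp_basis (compose Q p P)) (partial_trees \<phi> (insert p C))"
  unfolding basis_compose partial_trees_insert[OF C_closed p_child p_notin_C]
  using bij_composed_tree_Zl bij_composed_tree_Pr by (rule bij_betw_combine) blast

lemma inputs_compose: "sp_inputs (compose Q p P) = children (insert p C) - insert p C"
proof -
  have "p @ [i] \<notin> C" for i using C_closed p_notin_C by blast
  then show ?thesis
    unfolding compose_simps gateprog_inputs inputs_eq children_insert by auto
qed

lemma target_compose:
  assumes c: "c \<in> sp_basis (compose Q p P)"
  shows "sp_target (compose Q p P) c = complex_of_real (target_coef \<phi> s (insert p C) (composed_tree c))"
  using c
proof (cases rule: basis_compose_cases)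
  case (Zl l)
  then show ?thesis
    unfolding compose_simps gateprog_target_norm composed_tree_def
    using target_eq target_coef_insert_out[OF finite_C p_notin_C] by simp
next
  case (Pr l b)
  have "sp_target Q b = complex_of_real (in_brace \<phi> s (\<sigma> l \<union> chosen_children \<phi> p b) p)"
    using gateprog_target[OF Pr(4) child_of_p_notin_tree[OF Pr(2)]] .
  moreover have "target_coef \<phi> s (insert p C) (\<sigma> l \<union> chosen_children \<phi> p b) =
      target_coef \<phi> s C (\<sigma> l) * in_brace \<phi> s (\<sigma> l \<union> chosen_children \<phi> p b) p"
    using Pr(3) by (intro target_coef_insert_in[OF finite_C p_notin_C] extended_tree_on_C) auto
  ultimately show ?thesis unfolding compose_simps composed_tree_def using Pr target_eq by simp
qed

lemma input_compose_child:
  assumes i: "i \<in> {1,2}" and c: "c \<in> sp_basis (compose Q p P)"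
  shows "sp_vec (compose Q p P) (pos_label (p @ [i])) c =
    complex_of_real (input_coef \<phi> s (insert p C) (p @ [i]) (composed_tree c))"
proof -
  have label: "pos_label (p @ [i]) = Pr (pos_label p) (L i)" using pos_label_snoc[OF p_nonempty] .
  have "new_index Q p P (pos_label (p @ [i]))"
    unfolding new_index_def label idx_eq[OF p_input] gateprog_inputs gateprog_idx using i by auto
  then have vec: "sp_vec (compose Q p P) (pos_label (p @ [i])) c =
      (case c of Pr l b \<Rightarrow> sp_vec P (pos_label p) l * sp_vec Q (L i) b | _ \<Rightarrow> 0)"
    unfolding compose_simps label by simp
  from c show ?thesis
  proof (cases rule: basis_compose_cases)
    case (Zl l)
    then show ?thesis using child_of_p_notin_tree[OF Zl(2)] unfolding vec composed_tree_def input_coef_def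
      by simp
  next
    case (Pr l b)
    have "input_coef \<phi> s (insert p C) (p @ [i]) (\<sigma> l \<union> chosen_children \<phi> p b) =
        (if p @ [i] \<in> \<sigma> l \<union> chosen_children \<phi> p b
         then input_coef \<phi> s C p (\<sigma> l) * path_brace \<phi> s (p @ [i]) p else 0)"
      using Pr(3) ancestors_subset_parent_closed[OF C_closed p_child]
      by (intro input_coef_insert_child[OF finite_C p_notin_C] extended_tree_on_C) auto
    then show ?thesis
      unfolding Pr(1) composed_tree_def
      using vec[unfolded Pr(1)] gateprog_vec[OF Pr(4) i child_of_p_notin_tree[OF Pr(2)]]
        vec_eq[OF p_input Pr(2)] by simp
  qed
qed

lemma not_new_index_old_input:
  assumes q: "q \<in> sp_inputs P"
  shows "\<not> new_index Q p P (pos_label q)"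
proof
  have q_child: "q \<in> children C" using q inputs_eq by blast
  assume "new_index Q p P (pos_label q)"
  then obtain i where "pos_label q = pos_label (p @ [i])"
    unfolding new_index_def idx_eq[OF p_input] gateprog_inputs gateprog_idx pos_label_snoc[OF p_nonempty]
    by (auto split: if_splits)
  moreover have "q \<noteq> []" using q_child unfolding children_def by auto
  ultimately have "q = p @ [i]" using pos_label_inj by blast
  then show False using q_child p_notin_C unfolding children_def by auto
qed

lemma input_compose_old:
  assumes q: "q \<in> sp_inputs P" and c: "c \<in> sp_basis (compose Q p P)"
  shows "sp_vec (compose Q p P) (pos_label q) c =
    complex_of_real (input_coef \<phi> s (insert p C) q (composed_tree c))"
proof -
  have q_child: "q \<in> children C" using q inputs_eq by blast
  have p_not_anc: "p \<notin> ancestors q"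
    using ancestors_subset_parent_closed[OF C_closed q_child] p_notin_C by blast
  have "\<not> new_index Q p P (pos_label q)" using not_new_index_old_input[OF q] .
  then have vec: "sp_vec (compose Q p P) (pos_label q) c =
      (case c of Pr l b \<Rightarrow> sp_vec P (pos_label q) l * sp_target Q b
        | Zl l \<Rightarrow> sp_vec P (pos_label q) l * complex_of_real (brace_out \<phi> s p) | L _ \<Rightarrow> 0)"
    unfolding compose_simps gateprog_target_norm by simp
  from c show ?thesis
  proof (cases rule: basis_compose_cases)
    case (Zl l)
    then show ?thesis
      unfolding vec composed_tree_def
      using vec_eq[OF q Zl(2)] input_coef_insert_out[OF finite_C p_notin_C _ p_not_anc] by simp
  next
    case (Pr l b)
    have "q \<notin> chosen_children \<phi> p b"
      using chosen_children_subset q_child p_notin_C unfolding children_def by fastforce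
    then have "input_coef \<phi> s (insert p C) q (\<sigma> l \<union> chosen_children \<phi> p b) =
        input_coef \<phi> s C q (\<sigma> l) * in_brace \<phi> s (\<sigma> l \<union> chosen_children \<phi> p b) p"
      using Pr(3) p_not_anc
      by (intro input_coef_insert_in[OF finite_C p_notin_C] extended_tree_on_C) auto
    then show ?thesis
      unfolding Pr(1) composed_tree_def
      using vec[unfolded Pr(1)] vec_eq[OF q Pr(2)]
        gateprog_target[OF Pr(4) child_of_p_notin_tree[OF Pr(2)]] by simp
  qed
qed

lemma composition_invariant_compose:
  "composition_invariant \<phi> s (compose Q p P) (insert p C) composed_tree"
proof -
  have "finite ((\<lambda>(l, b). Pr l b) ` (sp_basis P \<times> sp_basis Q))"
    using finite_basis by (simp add: gateprog_basis)
  moreover have "{Pr l b | l b. l \<in> sp_basis P \<and> p \<in> \<sigma> l \<and> b \<in> sp_basis Q} \<subseteq>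
      (\<lambda>(l, b). Pr l b) ` (sp_basis P \<times> sp_basis Q)" by auto
  ultimately have "finite (sp_basis (compose Q p P))"
    unfolding basis_compose using finite_basis finite_subset by auto
  moreover have "\<forall>q i. q @ [i] \<in> insert p C \<longrightarrow> q \<in> insert p C"
    using C_closed p_child unfolding children_def by auto
  moreover have "sp_idx (compose Q p P) q = {pos_label q} \<and>
      (\<forall>c\<in>sp_basis (compose Q p P). sp_vec (compose Q p P) (pos_label q) c =
         complex_of_real (input_coef \<phi> s (insert p C) q (composed_tree c)))"
    if q: "q \<in> sp_inputs (compose Q p P)" for q
  proof (cases "q \<in> sp_inputs Q")
    case True
    then obtain i where i: "q = p @ [i]" "i \<in> {1,2}" unfolding gateprog_inputs by auto
    then have "sp_idx (compose Q p P) q = {pos_label q}"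
      unfolding compose_simps gateprog_inputs gateprog_idx idx_eq[OF p_input]
      by (auto simp: pos_label_snoc[OF p_nonempty])
    then show ?thesis using input_compose_child[OF i(2)] i(1) by simp
  next
    case False
    then have "q \<in> sp_inputs P" "q \<noteq> p" using q unfolding compose_simps by auto
    moreover have "sp_idx (compose Q p P) q = {pos_label q}"
      using False calculation idx_eq unfolding compose_simps by simp
    ultimately show ?thesis using input_compose_old by simp
  qed
  ultimately show ?thesis
    unfolding composition_invariant_def
    using finite_C C_gates p_gate root_in_C inputs_compose bij_compose target_compose by simp
qed

end

section \<open>The fully composed span program\<close>

lemma reach_composition_invariant:
  assumes pos: "\<forall>v\<in>gates \<phi>. s v 1 > 0 \<and> s v 2 > 0"
  shows "reach \<phi> s P \<Longrightarrow> \<exists>C \<sigma>. composition_invariant \<phi> s P C \<sigma>"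
proof (induction rule: reach.induct)
  case root
  then show ?case using composition_invariant_root by blast
next
  case (step P p)
  then obtain C \<sigma> where "composition_invariant \<phi> s P C \<sigma>" by blast
  then interpret gate_composition \<phi> s P C \<sigma> p using pos step.hyps(2,3) by unfold_locales
  show ?case using composition_invariant_compose by blast
qed

lemma composition_invariant_all_gates:
  assumes inv: "composition_invariant \<phi> s P C \<sigma>" and no_gate_input: "sp_inputs P \<inter> gates \<phi> = {}"
  shows "C = gates \<phi>"
proof
  show "C \<subseteq> gates \<phi>" using inv unfolding composition_invariant_def by blast
  have root: "[] \<in> C" and inputs: "sp_inputs P = children C - C"
    using inv unfolding composition_invariant_def by blast+
  show "gates \<phi> \<subseteq> C"
  proof
    fix g assume "g \<in> gates \<phi>"
    then show "g \<in> C"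
    proof (induction g rule: rev_induct)
      case (snoc i q)
      then obtain u where "sub \<phi> (q @ [i]) = Some u" unfolding gates_def by blast
      then obtain g a b where "sub \<phi> q = Some (Gate g a b)" "i \<in> {1,2}" using sub_snocD by blast
      then have "q @ [i] \<in> children C" using snoc.IH unfolding gates_def children_def by blast
      then show ?case using inputs no_gate_input snoc.prems by blast
    qed (use root in simp)
  qed
qed

lemma jx_Tx:
  assumes S: "S \<in> partial_trees \<phi> (gates \<phi>)" and tx: "Tx \<phi> x = S"
    and v: "v \<in> gates \<phi>" "v \<in> S" "isAND \<phi> v"
  shows "jx \<phi> x v = (if v @ [1] \<in> S then 1 else 2)"
proof -
  have "(v @ [1] \<in> S) \<noteq> (v @ [2] \<in> S)" using partial_treesD(5)[OF S v(2,1,3)] .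
  then show ?thesis unfolding jx_def tx by (intro the_equality) auto
qed

lemma in_brace_eq_brace_in:
  assumes dist: "distinct (leaves \<phi>)" and lv: "set (leaves \<phi>) = {1..n}"
    and r: "\<exists>g a b. \<phi> = Gate g a b" and S: "S \<in> partial_trees \<phi> (gates \<phi>)"
    and v: "v \<in> gates \<phi> \<inter> S"
  shows "in_brace \<phi> s S v = brace_in \<phi> s (tree_input \<phi> n S) v"
  using jx_Tx[OF S Tx_eqI[OF partial_tree_Tx_ok[OF dist lv r S]]] v
  unfolding in_brace_def brace_in_def by auto

lemma target_coef_eq_tcoef:
  assumes "distinct (leaves \<phi>)" and "set (leaves \<phi>) = {1..n}"
    and "\<exists>g a b. \<phi> = Gate g a b" and S: "S \<in> partial_trees \<phi> (gates \<phi>)"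
  shows "complex_of_real (target_coef \<phi> s (gates \<phi>) S) = tcoef \<phi> s (tree_input \<phi> n S)"
  using in_brace_eq_brace_in[OF assms] Tx_eqI[OF partial_tree_Tx_ok[OF assms]]
  unfolding target_coef_def tcoef_def by simp

lemma gamma_eq_ancestors:
  assumes dist: "distinct (leaves \<phi>)" and k: "k \<in> set (leaves \<phi>)"
  shows "gamma \<phi> k = ancestors (leafpos \<phi> k)"
proof (intro set_eqI iffI)
  have leaf: "sub \<phi> (leafpos \<phi> k) = Some (Leaf k)" using sub_leafpos[OF dist k] .
  fix v
  assume "v \<in> gamma \<phi> k"
  then obtain q where v: "v \<in> gates \<phi>" "leafpos \<phi> k = v @ q" unfolding gamma_def by blast
  then have "q \<noteq> []" using leaf unfolding gates_def by auto
  then show "v \<in> ancestors (leafpos \<phi> k)" using v unfolding ancestors_def by blast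
next
  have leaf: "sub \<phi> (leafpos \<phi> k) = Some (Leaf k)" using sub_leafpos[OF dist k] .
  fix v
  assume "v \<in> ancestors (leafpos \<phi> k)"
  then obtain q where q: "q \<noteq> []" "leafpos \<phi> k = v @ q" unfolding ancestors_def by blast
  then obtain j q' where "q = j # q'" by (cases q) auto
  then have "v \<in> gates \<phi>" using sub_append_Cons_Gate[of \<phi> v j q'] leaf q unfolding gates_def by auto
  then show "v \<in> gamma \<phi> k" unfolding gamma_def using q by blast
qed

lemma input_coef_eq_vcoef:
  assumes dist: "distinct (leaves \<phi>)" and lv: "set (leaves \<phi>) = {1..n}"
    and r: "\<exists>g a b. \<phi> = Gate g a b" and S: "S \<in> partial_trees \<phi> (gates \<phi>)" and k: "k \<in> {1..n}"
  shows "complex_of_real (input_coef \<phi> s (gates \<phi>) (leafpos \<phi> k) S) = vcoef \<phi> s k (tree_input \<phi> n S)"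
proof -
  have "gamma \<phi> k = ancestors (leafpos \<phi> k)" using gamma_eq_ancestors[OF dist] k lv by simp
  moreover have "tree_input \<phi> n S k \<longleftrightarrow> leafpos \<phi> k \<notin> S" using k unfolding tree_input_def by simp
  ultimately show ?thesis
    using in_brace_eq_brace_in[OF dist lv r S] Tx_eqI[OF partial_tree_Tx_ok[OF dist lv r S]]
    unfolding input_coef_def vcoef_def path_brace_def brace_path_def jk_def by simp
qed

lemma leafposs_eq_leafpos_image:
  assumes dist: "distinct (leaves \<phi>)" and lv: "set (leaves \<phi>) = {1..n}"
  shows "leafposs \<phi> = leafpos \<phi> ` {1..n}"
  unfolding leafposs_def using sub_leafpos[OF dist] leafpos_eq[OF dist] sub_Leaf_in_leaves lv
  by (auto simp: image_iff) (metis atLeastAtMost_iff)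

lemma leaflabel_leafpos:
  "distinct (leaves \<phi>) \<Longrightarrow> k \<in> set (leaves \<phi>) \<Longrightarrow> leaflabel \<phi> (leafpos \<phi> k) = k"
  unfolding leaflabel_def using sub_leafpos by simp

lemma complete_composition:
  assumes dist: "distinct (leaves \<phi>)" and lv: "set (leaves \<phi>) = {1..n}"
    and r: "\<exists>g a b. \<phi> = Gate g a b" and pos: "\<forall>v\<in>gates \<phi>. s v 1 > 0 \<and> s v 2 > 0"
    and inv: "composition_invariant \<phi> s P (gates \<phi>) \<sigma>"
  shows "bij_betw (tree_input \<phi> n \<circ> \<sigma>) (sp_basis P) (Uset \<phi> n)"
    and "sp_inputs P = leafposs \<phi>"
    and "\<And>b. b \<in> sp_basis P \<Longrightarrow> sp_target P b = tcoef \<phi> s (tree_input \<phi> n (\<sigma> b))"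
    and "\<And>b. b \<in> sp_basis P \<Longrightarrow> sp_target P b \<noteq> 0"
    and "\<And>k. k \<in> {1..n} \<Longrightarrow> sp_idx P (leafpos \<phi> k) = {pos_label (leafpos \<phi> k)}"
    and "\<And>k b. k \<in> {1..n} \<Longrightarrow> b \<in> sp_basis P \<Longrightarrow>
           sp_vec P (pos_label (leafpos \<phi> k)) b = vcoef \<phi> s k (tree_input \<phi> n (\<sigma> b))"
proof -
  note I = composition_invariantD[OF inv]
  have trees: "\<sigma> b \<in> partial_trees \<phi> (gates \<phi>)" if "b \<in> sp_basis P" for b
    using bij_betw_apply[OF I(7) that] .
  show "bij_betw (tree_input \<phi> n \<circ> \<sigma>) (sp_basis P) (Uset \<phi> n)"
    using bij_betw_trans[OF I(7) bij_betw_tree_input[OF dist lv r]] .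
  show inputs: "sp_inputs P = leafposs \<phi>" using I(6) leafposs_eq[OF r] by simp
  show "sp_target P b = tcoef \<phi> s (tree_input \<phi> n (\<sigma> b))" if "b \<in> sp_basis P" for b
    using I(8)[OF that] target_coef_eq_tcoef[OF dist lv r trees[OF that]] by simp
  show "sp_target P b \<noteq> 0" if "b \<in> sp_basis P" for b
    using I(8)[OF that] target_coef_pos[OF pos order_refl, of "\<sigma> b"] by simp
  have leaf_input: "leafpos \<phi> k \<in> sp_inputs P" if "k \<in> {1..n}" for k
    using sub_leafpos[OF dist] that lv unfolding inputs leafposs_def by auto
  show "sp_idx P (leafpos \<phi> k) = {pos_label (leafpos \<phi> k)}" if "k \<in> {1..n}" for k
    using I(9)[OF leaf_input[OF that]] .
  show "sp_vec P (pos_label (leafpos \<phi> k)) b = vcoef \<phi> s k (tree_input \<phi> n (\<sigma> b))"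
    if "k \<in> {1..n}" "b \<in> sp_basis P" for k b
    using I(10)[OF leaf_input[OF that(1)] that(2)] input_coef_eq_vcoef[OF dist lv r trees[OF that(2)] that(1)]
    by simp
qed

lemma vcoef_eq_0_iff:
  assumes dist: "distinct (leaves \<phi>)" and lv: "set (leaves \<phi>) = {1..n}"
    and r: "\<exists>g a b. \<phi> = Gate g a b" and pos: "\<forall>v\<in>gates \<phi>. s v 1 > 0 \<and> s v 2 > 0"
    and x: "x \<in> Uset \<phi> n" and k: "k \<in> {1..n}"
  shows "vcoef \<phi> s k x = 0 \<longleftrightarrow> x k"
proof
  assume zero: "vcoef \<phi> s k x = 0"
  have "Tx_ok \<phi> x (false_positions \<phi> x)" using maxfalse_Tx_ok[OF dist lv r] x unfolding Uset_def by simp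
  then have t: "Tx_ok \<phi> x (Tx \<phi> x)" using Tx_eqI by simp
  have x_eq: "tree_input \<phi> n (Tx \<phi> x) = x"
    using maxfalse_tree_input_Tx[OF dist lv r] x unfolding Uset_def by simp
  have leaf: "sub \<phi> (leafpos \<phi> k) = Some (Leaf k)" using sub_leafpos[OF dist] k lv by simp
  have anc: "ancestors (leafpos \<phi> k) \<subseteq> gates \<phi>"
    using gamma_eq_ancestors[OF dist] k lv unfolding gamma_def by auto
  show "x k"
  proof (rule ccontr)
    assume "\<not> x k"
    then have "leafpos \<phi> k \<in> Tx \<phi> x" using Tx_okD(4)[OF t leaf] by simp
    then have "input_coef \<phi> s (gates \<phi>) (leafpos \<phi> k) (Tx \<phi> x) > 0"
      using input_coef_pos[OF pos order_refl anc] leaf by simp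
    moreover have "complex_of_real (input_coef \<phi> s (gates \<phi>) (leafpos \<phi> k) (Tx \<phi> x)) = 0"
      using input_coef_eq_vcoef[OF dist lv r Tx_ok_partial_tree[OF r t] k] x_eq zero by simp
    ultimately show False by simp
  qed
qed (simp add: vcoef_def)

lemma witness_basis_vector:
  assumes fin: "finite (sp_basis P)" and b0: "b0 \<in> sp_basis P" and t: "sp_target P b0 \<noteq> 0"
    and vanish: "\<forall>p\<in>sp_inputs P. y p \<longrightarrow> (\<forall>i\<in>sp_idx P p. sp_vec P i b0 = 0)"
    and w: "\<And>b. b \<in> sp_basis P \<Longrightarrow> w b = (if b = b0 then 1 / cnj (sp_target P b0) else 0)"
  shows "witness P y w"
proof -
  have ip: "ip P u w = cnj (u b0) / cnj (sp_target P b0)" for u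
  proof -
    have "ip P u w = (\<Sum>b\<in>sp_basis P. if b = b0 then cnj (u b0) / cnj (sp_target P b0) else 0)"
      unfolding ip_def using w by (intro sum.cong) auto
    then show ?thesis using fin b0 by simp
  qed
  show ?thesis unfolding witness_def ip using t vanish by simp
qed

lemma witness_indicator:
  assumes fin: "finite (sp_basis P)" and bij: "bij_betw f (sp_basis P) X" and x: "x \<in> X"
    and at_x: "\<And>b. b \<in> sp_basis P \<Longrightarrow> f b = x \<Longrightarrow>
      sp_target P b \<noteq> 0 \<and> (\<forall>p\<in>sp_inputs P. y p \<longrightarrow> (\<forall>i\<in>sp_idx P p. sp_vec P i b = 0))"
  shows "witness P y (\<lambda>b. if f b = x then 1 / cnj (sp_target P b) else 0)"
proof -
  have "x \<in> f ` sp_basis P" using bij x unfolding bij_betw_def by simp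
  then obtain b0 where b0: "b0 \<in> sp_basis P" "f b0 = x" by blast
  have "f b = x \<longleftrightarrow> b = b0" if "b \<in> sp_basis P" for b
    using bij b0 that unfolding bij_betw_def inj_on_def by blast
  then show ?thesis using at_x[OF b0] by (intro witness_basis_vector[OF fin b0(1)]) auto
qed

lemma complete_composition_witness:
  assumes dist: "distinct (leaves \<phi>)" and lv: "set (leaves \<phi>) = {1..n}"
    and "\<exists>g a b. \<phi> = Gate g a b" and "\<forall>v\<in>gates \<phi>. s v 1 > 0 \<and> s v 2 > 0"
    and inv: "composition_invariant \<phi> s P (gates \<phi>) \<sigma>" and x: "x \<in> Uset \<phi> n"
  shows "witness P (\<lambda>p. x (leaflabel \<phi> p))
    (\<lambda>b. if (tree_input \<phi> n \<circ> \<sigma>) b = x then 1 / cnj (sp_target P b) else 0)"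
proof (rule witness_indicator[OF composition_invariantD(1)[OF inv] complete_composition(1)[OF assms(1-5)] x])
  note P = complete_composition[OF assms(1-5)]
  fix b assume b: "b \<in> sp_basis P" "(tree_input \<phi> n \<circ> \<sigma>) b = x"
  have "sp_vec P i b = 0"
    if p: "p \<in> sp_inputs P" and xp: "x (leaflabel \<phi> p)" and i: "i \<in> sp_idx P p" for p i
  proof -
    obtain k where "k \<in> {1..n}" "p = leafpos \<phi> k"
      using p P(2) leafposs_eq_leafpos_image[OF dist lv] by auto
    then show ?thesis using xp i b P(5,6) leaflabel_leafpos[OF dist] lv by (simp add: vcoef_def)
  qed
  then show "sp_target P b \<noteq> 0 \<and>
      (\<forall>p\<in>sp_inputs P. x (leaflabel \<phi> p) \<longrightarrow> (\<forall>i\<in>sp_idx P p. sp_vec P i b = 0))"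
    using P(4)[OF b(1)] by blast
qed

theorem lemma3p6:
  fixes \<phi> :: form and n :: nat and s :: weights and P :: sprog
  assumes "distinct (leaves \<phi>)" and "set (leaves \<phi>) = {1..n}"
    and "\<exists>g a b. \<phi> = Gate g a b"
    and "\<forall>v\<in>gates \<phi>. s v 1 > 0 \<and> s v 2 > 0"
    and "reach \<phi> s P"
    and "sp_inputs P \<inter> gates \<phi> = {}"
  shows "\<exists>\<sigma>. bij_betw \<sigma> (sp_basis P) (Uset \<phi> n) \<and>
     (\<forall>b\<in>sp_basis P. sp_target P b = tcoef \<phi> s (\<sigma> b)) \<and>
     sp_inputs P = leafposs \<phi> \<and>
     (\<forall>k\<in>{1..n}. \<exists>i. sp_idx P (leafpos \<phi> k) = {i} \<and>
        (\<forall>b\<in>sp_basis P. sp_vec P i b = vcoef \<phi> s k (\<sigma> b))) \<and>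
     (\<forall>x\<in>Uset \<phi> n. \<forall>k\<in>{1..n}. vcoef \<phi> s k x = 0 \<longleftrightarrow> x k) \<and>
     (\<forall>x\<in>Uset \<phi> n. witness P (\<lambda>p. x (leaflabel \<phi> p))
        (\<lambda>b. if \<sigma> b = x then 1 / cnj (sp_target P b) else 0))"
proof -
  note dist = assms(1) and lv = assms(2) and r = assms(3) and pos = assms(4)
  obtain C \<sigma> where inv: "composition_invariant \<phi> s P C \<sigma>"
    using reach_composition_invariant[OF pos assms(5)] by blast
  with composition_invariant_all_gates[OF inv assms(6)]
  have inv: "composition_invariant \<phi> s P (gates \<phi>) \<sigma>" by simp
  note P = complete_composition[OF dist lv r pos inv]
  let ?\<sigma> = "tree_input \<phi> n \<circ> \<sigma>"
  have "witness P (\<lambda>p. x (leaflabel \<phi> p)) (\<lambda>b. if ?\<sigma> b = x then 1 / cnj (sp_target P b) else 0)"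
    if "x \<in> Uset \<phi> n" for x
    using complete_composition_witness[OF dist lv r pos inv that] .
  then show ?thesis
    using P(1-3,5,6) vcoef_eq_0_iff[OF dist lv r pos] by (intro exI[of _ ?\<sigma>]) auto
qed

end
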